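(* Let $(G,L,v)$ be a reachable triple, $i\in[4]$ a color and $D\ge2$ an integer. Then: (1) $P(G,L,v,i,D)=0$ if and only if $\Pr_{G,L}[c(v)=i]=0$; (2) $P(G,L,v,i,D)=\frac12$ if and only if $\Pr_{G,L}[c(v)=i]=\frac12$; (3) $P(G,L,v,i,D)\in[\frac1{13},\frac{13}{27}]$ if and only if $\Pr_{G,L}[c(v)=i]\in[\frac1{13},\frac{13}{27}]$.
   Context: Colors are $[4]=\{1,2,3,4\}$. A list-coloring instance $(G,L)$ is a finite simple graph $G=(V,E)$ with $L:V\to 2^{[4]}$; a proper coloring is $c:V\to[4]$ with $c(u)\in L(u)$ for all $u$ and $c(u)\ne c(w)$ on every edge; $\Pr_{G,L}[c(v)=i]$ is the probability that $c(v)=i$ for $c$ uniform over proper colorings of $(G,L)$. For a vertex $v$, $G_v$ is $G$ with $v$ and its incident edges removed, and $G_{v,w}=(G_v)_w$. If $v$ has neighbors $v_1,\dots,v_d$ (in a fixed order), then for $k\in[d]$ and a color $j$, $L_{k,j}$ is the list assignment on $G_v$ with $L_{k,j}(v_\ell)=L(v_\ell)\setminus\{j\}$ for $\ell<k$ and $L_{k,j}(u)=L(u)$ for all other vertices $u$ (so $L_{1,j}=L$). A triple $(G,L,v)$ with $v\in V$ is reachable if $\deg_G(u)\le3$ and $|L(u)|\ge\deg_G(u)+1$ for every $u\in V$, and moreover $\deg_G(v)\le2$ and $|L(v)|\ge\deg_G(v)+2$. The procedure $P(G,L,v,i,D)$ ($i\in[4]$, $D$ an integer) is defined recursively (empty products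 equal $1$): (a) If $i\notin L(v)$, return $0$. Otherwise, if $D\le 0$ or $\deg_G(v)=0$, return $1/|L(v)|$. (b) If $\deg_G(v)=1$ with neighbor $v_1$: let $x=P(G_v,L,v_1,i,D-1)$. If $|L(v)|=2$, say $L(v)=\{i,j\}$, let $y=P(G_v,L,v_1,j,D-1)$ and return $\frac{1-x}{2-x-y}$. If $|L(v)|=4$, return $\frac{1-x}{3}$. If $|L(v)|=3$, let $j$ be the unique color in $[4]\setminus L(v)$, $y=P(G_v,L,v_1,j,D-1)$, and return $\frac{1-x}{2+y}$. (c) If $\deg_G(v)=2$: order its neighbors $v_1,v_2$ so that $\deg_G(v_1)\ge\deg_G(v_2)$ and, if $\deg_G(v_1)=\deg_G(v_2)=1$, so that $i\notin L(v_1)$ implies $i\notin L(v_2)$. Let $u_1,\dots,u_{d_1}$ be the neighbors of $v_1$ in $G_v$ (fixed order) and for $k\in[d_1]$, $w\in[4]$ let $L'_{k,w}$ be the list assignment on $G_{v,v_1}$ with $L'_{k,w}(u_\ell)=L(u_\ell)\setminus\{w\}$ for $\ell<k$ and $L'_{k,w}(u)=L(u)$ otherwise. Set $x_{k,w}=P(G_{v,v_1},L'_{k,w},u_k,w,D-1)$ for $k\in[d_1]$, $w\in L(v_1)$. For $j\in L(v)$ set $f_j=0$ if $j\notin L(v_1)$ and otherwise $f_j=\frac{\prod_{k=1}^{d_1}(1-x_{k,j})}{\sum_{w\in L(v_1)}\prod_{k=1}^{d_1}(1-x_{k,w})}$, and set $y_j=P(G_v,L_{2,j},v_2,j,D-1)$.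 Return $\frac{(1-f_i)(1-y_i)}{\sum_{j\in L(v)}(1-f_j)(1-y_j)}$. (d) If $\deg_G(v)=3$ with neighbors $v_1,v_2,v_3$: for $j\in L(v)$ let $x_j=P(G_v,L_{1,j},v_1,j,D-1)$, $y_j=P(G_v,L_{2,j},v_2,j,D-1)$, $z_j=P(G_v,L_{3,j},v_3,j,D-1)$, and return $\frac{(1-x_i)(1-y_i)(1-z_i)}{\sum_{j\in L(v)}(1-x_j)(1-y_j)(1-z_j)}$. For reachable triples, all recursive calls are again on reachable triples and case (d) never occurs. *)

theory Defs
  imports Complex_Main
begin

text \<open>Graphs: a pair (V, E) with E a set of 2-element subsets of V.
  Colours are the naturals 1..4. A list assignment is a function 'a => nat set.\<close>

type_synonym 'a graph = "'a set \<times> 'a set set"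
type_synonym 'a lists = "'a \<Rightarrow> nat set"
type_synonym 'a nbord = "'a set set \<Rightarrow> 'a \<Rightarrow> 'a list"

definition nbrs :: "'a set set \<Rightarrow> 'a \<Rightarrow> 'a set" where
  "nbrs E v = {u. {u, v} \<in> E}"

definition deg :: "'a set set \<Rightarrow> 'a \<Rightarrow> nat" where
  "deg E v = card (nbrs E v)"

definition simple_graph :: "'a graph \<Rightarrow> bool" where
  "simple_graph G \<longleftrightarrow> finite (fst G) \<and> (\<forall>e\<in>snd G. e \<subseteq> fst G \<and> card e = 2)"

definition delv :: "'a graph \<Rightarrow> 'a \<Rightarrow> 'a graph" where
  "delv G v = (fst G - {v}, {e \<in> snd G. v \<notin> e})"

text \<open>The "fixed order" of neighbours: an arbitrary function listing the
  neighbours of a vertex (in a given edge set) without repetition.\<close>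
definition valid_nb :: "'a nbord \<Rightarrow> bool" where
  "valid_nb nb \<longleftrightarrow> (\<forall>E u. finite (nbrs E u) \<longrightarrow>
      distinct (nb E u) \<and> set (nb E u) = nbrs E u)"

text \<open>lmod L us k w removes w from the lists of the first k entries of us
  (0-based positions 0..k-1). Thus L_{k,j} of the paper (1-based k) is lmod L us (k-1) j.\<close>
definition lmod :: "'a lists \<Rightarrow> 'a list \<Rightarrow> nat \<Rightarrow> nat \<Rightarrow> 'a lists" where
  "lmod L us k w = (\<lambda>u. if u \<in> set (take k us) then L u - {w} else L u)"

definition colorings :: "'a graph \<Rightarrow> 'a lists \<Rightarrow> ('a \<Rightarrow> nat) set" where
  "colorings G L = {c. (\<forall>u\<in>fst G. c u \<in> L u) \<and> (\<forall>u. u \<notin> fst G \<longrightarrow> c u = 0)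
      \<and> (\<forall>e\<in>snd G. \<forall>x\<in>e. \<forall>y\<in>e. x \<noteq> y \<longrightarrow> c x \<noteq> c y)}"

definition prob :: "'a graph \<Rightarrow> 'a lists \<Rightarrow> 'a \<Rightarrow> nat \<Rightarrow> real" where
  "prob G L v i = real (card {c \<in> colorings G L. c v = i}) / real (card (colorings G L))"

definition reachable :: "'a graph \<Rightarrow> 'a lists \<Rightarrow> 'a \<Rightarrow> bool" where
  "reachable G L v \<longleftrightarrow> simple_graph G \<and> (\<forall>u\<in>fst G. L u \<subseteq> {1..4})
     \<and> (\<forall>u\<in>fst G. deg (snd G) u \<le> 3 \<and> card (L u) \<ge> deg (snd G) u + 1)
     \<and> v \<in> fst G \<and> deg (snd G) v \<le> 2 \<and> card (L v) \<ge> deg (snd G) v + 2"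

text \<open>One unfolding of the procedure, with R the procedure at depth D-1.\<close>
definition Pstep :: "'a nbord \<Rightarrow> ('a graph \<Rightarrow> 'a lists \<Rightarrow> 'a \<Rightarrow> nat \<Rightarrow> real)
    \<Rightarrow> 'a graph \<Rightarrow> 'a lists \<Rightarrow> 'a \<Rightarrow> nat \<Rightarrow> real" where
  "Pstep nb R G L v i =
    (let E = snd G; ns = nb E v; Gv = delv G v in
     if i \<notin> L v then 0
     else if deg E v = 0 then 1 / real (card (L v))
     else if deg E v = 1 then
       (let v1 = ns ! 0; x = R Gv L v1 i in
        if card (L v) = 2 then
          (let j = the_elem (L v - {i}); y = R Gv L v1 j in (1 - x) / (2 - x - y))
        else if card (L v) = 4 then (1 - x) / 3
        else if card (L v) = 3 then
          (let j = the_elem ({1..4} - L v); y = R Gv L v1 j in (1 - x) / (2 + y))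
        else 0)
     else if deg E v = 2 then
       (let a = ns ! 0; b = ns ! 1;
            ok = (deg E a \<ge> deg E b \<and>
                  (deg E a = 1 \<and> deg E b = 1 \<longrightarrow> (i \<notin> L a \<longrightarrow> i \<notin> L b)));
            v1 = (if ok then a else b); v2 = (if ok then b else a);
            Gvv1 = delv Gv v1;
            us = nb (snd Gv) v1; d1 = length us;
            pw = (\<lambda>w. \<Prod>k<d1. (1 - R Gvv1 (lmod L us k w) (us ! k) w));
            f = (\<lambda>j. if j \<notin> L v1 then 0 else pw j / (\<Sum>w\<in>L v1. pw w));
            y = (\<lambda>j. R Gv (lmod L [v1, v2] 1 j) v2 j)
        in (1 - f i) * (1 - y i) / (\<Sum>j\<in>L v. (1 - f j) * (1 - y j)))
     else if deg E v = 3 then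
       (let t = (\<lambda>j. \<Prod>k<3. (1 - R Gv (lmod L ns k j) (ns ! k) j))
        in t i / (\<Sum>j\<in>L v. t j))
     else 0)"

primrec Pfuel :: "'a nbord \<Rightarrow> nat \<Rightarrow> 'a graph \<Rightarrow> 'a lists \<Rightarrow> 'a \<Rightarrow> nat \<Rightarrow> real" where
  "Pfuel nb 0 G L v i = (if i \<notin> L v then 0 else 1 / real (card (L v)))"
| "Pfuel nb (Suc n) G L v i = Pstep nb (Pfuel nb n) G L v i"

text \<open>The procedure P(G,L,v,i,D) for an integer depth D (D \<le> 0 is the base case).\<close>
definition P :: "'a nbord \<Rightarrow> 'a graph \<Rightarrow> 'a lists \<Rightarrow> 'a \<Rightarrow> nat \<Rightarrow> int \<Rightarrow> real" where
  "P nb G L v i D = Pfuel nb (nat D) G L v i"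

end

theory Submission
  imports Defs "HOL-Library.FuncSet"
begin

text \<open>Conditioning on $c(v) = i$ and removing $i$ from the neighbours' lists one at a time shows
  that the true marginals satisfy the recursion of the procedure exactly; so both the procedure
  and the true marginals arise from one step of the same recursion, applied to different inputs
  on smaller instances. By induction on the number of vertices, one step preserves an invariant:
  values lie in $[0, 1/2]$, vanish exactly for colours outside the list, are at least $1/13$
  (at least $1/6$ at degree $\le 1$) otherwise, and are either $1/2$ or at most $13/27$. Zeros are
  then determined by the lists alone, and whether a value is $1/2$ is determined by the zero
  pattern two levels down, which the procedure sees once $D \ge 2$. Under the invariant a value
  lies in $[1/13, 13/27]$ iff it is neither $0$ nor $1/2$.\<close>

section \<open>Graphs and admissible list assignments\<close>

lemma nbrs_sym: "x \<in> nbrs E u \<longleftrightarrow> u \<in> nbrs E x"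
  unfolding nbrs_def by (simp add: insert_commute)

lemma nbrs_delv: "nbrs (snd (delv G v)) u = (if u = v then {} else nbrs (snd G) u - {v})"
  unfolding nbrs_def delv_def by auto

lemma nbrs_subset: "simple_graph G \<Longrightarrow> nbrs (snd G) u \<subseteq> fst G"
  unfolding simple_graph_def nbrs_def by auto

lemma finite_nbrs: "simple_graph G \<Longrightarrow> finite (nbrs (snd G) u)"
  using nbrs_subset simple_graph_def finite_subset by metis

lemma not_in_nbrs_self: "simple_graph G \<Longrightarrow> u \<notin> nbrs (snd G) u"
  unfolding simple_graph_def nbrs_def by force

lemma simple_graph_finite: "simple_graph G \<Longrightarrow> finite (fst G)"
  unfolding simple_graph_def by blast

lemma simple_graph_edge: "simple_graph G \<Longrightarrow> e \<in> snd G \<Longrightarrow> u \<in> e \<Longrightarrow> \<exists>x. x \<noteq> u \<and> e = {u, x}"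
  unfolding simple_graph_def by (metis card_2_iff insert_commute insert_iff singletonD)

lemma simple_graph_delv: "simple_graph G \<Longrightarrow> simple_graph (delv G v)"
  unfolding simple_graph_def delv_def by auto

lemma card_delv_less: "simple_graph G \<Longrightarrow> v \<in> fst G \<Longrightarrow> card (fst (delv G v)) < card (fst G)"
  unfolding delv_def fst_conv by (rule card_Diff1_less[OF simple_graph_finite])

lemma deg_pos: "simple_graph G \<Longrightarrow> x \<in> nbrs (snd G) u \<Longrightarrow> deg (snd G) u \<ge> 1"
  unfolding deg_def using finite_nbrs[of G u] by (metis card_0_eq empty_iff less_one not_le)

lemma deg_delv_le: "simple_graph G \<Longrightarrow> deg (snd (delv G v)) u \<le> deg (snd G) u"
  unfolding deg_def nbrs_delv using finite_nbrs[of G u] by (auto intro: card_mono)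

lemma deg_delv_nbr: "simple_graph G \<Longrightarrow> u \<in> nbrs (snd G) v \<Longrightarrow>
    deg (snd (delv G v)) u = deg (snd G) u - 1"
  unfolding deg_def nbrs_delv
  using not_in_nbrs_self[of G v] nbrs_sym[of u "snd G" v] finite_nbrs[of G u]
  by (auto simp: card_Diff_singleton)

lemma valid_nb_nbrs:
  assumes "valid_nb nb" "simple_graph G"
  shows "distinct (nb (snd G) u)" "set (nb (snd G) u) = nbrs (snd G) u"
    "length (nb (snd G) u) = deg (snd G) u"
proof -
  have "finite (nbrs (snd G) u)" using finite_nbrs[OF assms(2)] .
  then show d: "distinct (nb (snd G) u)" and s: "set (nb (snd G) u) = nbrs (snd G) u"
    using assms(1) unfolding valid_nb_def by blast+
  show "length (nb (snd G) u) = deg (snd G) u"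
    unfolding deg_def s[symmetric] using distinct_card[OF d] by simp
qed

lemma nth_not_in_take: "distinct xs \<Longrightarrow> k < length xs \<Longrightarrow> xs ! k \<notin> set (take k xs)"
  by (auto simp: in_set_conv_nth nth_eq_iff_index_eq)

lemma lmod_0 [simp]: "lmod L us 0 j = L"
  unfolding lmod_def by auto

lemma lmod_Nil [simp]: "lmod L [] k j = L"
  unfolding lmod_def by auto

lemma lmod_subset: "lmod L us k j u \<subseteq> L u"
  unfolding lmod_def by auto

lemma lmod_outside: "u \<notin> set (take k us) \<Longrightarrow> lmod L us k j u = L u"
  unfolding lmod_def by auto

lemma lmod_pair: "lmod L [v1, v2] 1 j u = (if u = v1 then L u - {j} else L u)"
  unfolding lmod_def by simp

text \<open>The conditions of a reachable triple that do not refer to the distinguished vertex;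
  they are inherited by every subinstance met in the recursion.\<close>

definition admissible :: "'a graph \<Rightarrow> 'a lists \<Rightarrow> bool" where
  "admissible G L \<longleftrightarrow> simple_graph G \<and> (\<forall>u\<in>fst G. L u \<subseteq> {1..4})
     \<and> (\<forall>u\<in>fst G. deg (snd G) u \<le> 3 \<and> card (L u) \<ge> deg (snd G) u + 1)"

lemma admissibleD:
  assumes "admissible G L"
  shows "simple_graph G" "u \<in> fst G \<Longrightarrow> L u \<subseteq> {1..4}"
    "u \<in> fst G \<Longrightarrow> deg (snd G) u \<le> 3" "u \<in> fst G \<Longrightarrow> card (L u) \<ge> deg (snd G) u + 1"
  using assms unfolding admissible_def by auto

lemma admissible_finite_list: "admissible G L \<Longrightarrow> u \<in> fst G \<Longrightarrow> finite (L u)"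
  by (meson admissibleD(2) finite_atLeastAtMost finite_subset)

lemma reachable_iff: "reachable G L v \<longleftrightarrow>
    admissible G L \<and> v \<in> fst G \<and> deg (snd G) v \<le> 2 \<and> card (L v) \<ge> deg (snd G) v + 2"
  unfolding reachable_def admissible_def by auto

lemma card_le_4: "S \<subseteq> {1..4::nat} \<Longrightarrow> card S \<le> 4"
  using card_mono[of "{1..4::nat}" S] by simp

lemma subset_card_4: "S \<subseteq> {1..4::nat} \<Longrightarrow> card S \<ge> 4 \<Longrightarrow> S = {1..4}"
  using card_subset_eq[of "{1..4::nat}" S] card_le_4[of S] by simp

lemma subset_card_3: "S \<subseteq> {1..4::nat} - {i} \<Longrightarrow> i \<in> {1..4} \<Longrightarrow> card S \<ge> 3 \<Longrightarrow> S = {1..4} - {i}"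
proof -
  assume a: "S \<subseteq> {1..4::nat} - {i}" "i \<in> {1..4}" "card S \<ge> 3"
  have c: "card ({1..4::nat} - {i}) = 3" using a(2) by simp
  then have "card S \<le> 3" using card_mono[OF _ a(1)] by simp
  then show ?thesis using card_subset_eq[OF _ a(1)] a c by simp
qed

text \<open>Deleting a vertex lowers the degree of each of its neighbours by one, so the neighbours
  may each lose one colour.\<close>

lemma admissible_delv_lmod:
  assumes adm: "admissible G L" and "set us \<subseteq> nbrs (snd G) v"
  shows "admissible (delv G v) (lmod L us k j)"
  unfolding admissible_def
proof (intro conjI ballI)
  have sg: "simple_graph G" using admissibleD(1)[OF adm] .
  then show "simple_graph (delv G v)" by (rule simple_graph_delv)
  fix u assume "u \<in> fst (delv G v)"
  then have u: "u \<in> fst G" by (simp add: delv_def)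
  have d: "deg (snd (delv G v)) u \<le> deg (snd G) u" by (rule deg_delv_le[OF sg])
  show "lmod L us k j u \<subseteq> {1..4}" using admissibleD(2)[OF adm u] by (rule order_trans[OF lmod_subset])
  show "deg (snd (delv G v)) u \<le> 3" using d admissibleD(3)[OF adm u] by linarith
  show "card (lmod L us k j u) \<ge> deg (snd (delv G v)) u + 1"
  proof (cases "u \<in> set (take k us)")
    case True
    then have "u \<in> nbrs (snd G) v" using assms(2) by (meson in_set_takeD subsetD)
    moreover from this have "deg (snd G) u \<ge> 1" by (intro deg_pos[OF sg]) (simp add: nbrs_sym)
    ultimately have "deg (snd (delv G v)) u + 1 = deg (snd G) u"
      using deg_delv_nbr[OF sg] by (metis le_add_diff_inverse2)
    moreover have "card (L u - {j}) \<ge> card (L u) - 1"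
      by (simp add: card_Diff_singleton_if admissible_finite_list[OF adm u])
    ultimately show ?thesis
      using True admissibleD(4)[OF adm u] unfolding lmod_def by simp
  next
    case False
    then show ?thesis using d admissibleD(4)[OF adm u] by (simp add: lmod_outside)
  qed
qed

lemma admissible_delv: "admissible G L \<Longrightarrow> admissible (delv G v) L"
  using admissible_delv_lmod[of G L "[]" v] by simp

text \<open>The $k$-th neighbour loses one unit of degree and keeps its list, since $L_{k,j}$ only
  changes the earlier neighbours.\<close>

lemma reachable_nbr:
  assumes adm: "admissible G L" and "v \<in> fst G" and "distinct us"
    and us: "set us \<subseteq> nbrs (snd G) v" and k: "k < length us"
  shows "reachable (delv G v) (lmod L us k j) (us ! k)"
proof -
  have sg: "simple_graph G" using admissibleD(1)[OF adm] .
  let ?u = "us ! k"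
  have un: "?u \<in> nbrs (snd G) v" using us k nth_mem by blast
  have uV: "?u \<in> fst G" using nbrs_subset[OF sg] un by blast
  have "?u \<noteq> v" using not_in_nbrs_self[OF sg] un by blast
  then have "?u \<in> fst (delv G v)" using uV by (simp add: delv_def)
  moreover have "deg (snd G) ?u \<ge> 1" using un by (intro deg_pos[OF sg]) (simp add: nbrs_sym)
  then have "deg (snd (delv G v)) ?u + 1 = deg (snd G) ?u"
    using deg_delv_nbr[OF sg un] by linarith
  moreover have "lmod L us k j ?u = L ?u"
    using lmod_outside[OF nth_not_in_take[OF assms(3) k]] .
  ultimately show ?thesis
    unfolding reachable_iff using admissible_delv_lmod[OF adm us] admissibleD(3,4)[OF adm uV]
    by simp
qed

section \<open>Counting list colourings\<close>

lemma coloringsD: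
  assumes "c \<in> colorings G L"
  shows "u \<in> fst G \<Longrightarrow> c u \<in> L u" "u \<notin> fst G \<Longrightarrow> c u = 0"
    "e \<in> snd G \<Longrightarrow> x \<in> e \<Longrightarrow> y \<in> e \<Longrightarrow> x \<noteq> y \<Longrightarrow> c x \<noteq> c y"
  using assms unfolding colorings_def by auto

lemma colorings_mono: "(\<And>u. L' u \<subseteq> L u) \<Longrightarrow> colorings G L' \<subseteq> colorings G L"
  unfolding colorings_def by blast

lemma finite_colorings:
  assumes "finite (fst G)" and "\<And>u. u \<in> fst G \<Longrightarrow> finite (L u)"
  shows "finite (colorings G L)"
proof -
  have "inj_on (\<lambda>c. restrict c (fst G)) (colorings G L)"
    by (rule inj_onI, rule ext) (metis coloringsD(2) restrict_apply')
  moreover have "(\<lambda>c. restrict c (fst G)) ` colorings G L \<subseteq> PiE (fst G) L"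
    using coloringsD(1)[of _ G L] by (auto simp: PiE_def Pi_def)
  moreover have "finite (PiE (fst G) L)" using assms by (simp add: finite_PiE)
  ultimately show ?thesis using finite_subset finite_imageD by metis
qed

lemma coloring_extend:
  assumes sg: "simple_graph G" and uV: "u \<in> fst G" and c: "c \<in> colorings (delv G u) L'"
    and L': "\<And>x. x \<noteq> u \<Longrightarrow> L' x \<subseteq> L x" and a: "a \<in> L u"
    and free: "\<And>z. z \<in> nbrs (snd G) u \<Longrightarrow> c z \<noteq> a"
  shows "c(u := a) \<in> colorings G L"
  unfolding colorings_def
proof (intro CollectI conjI ballI allI impI)
  fix x assume "x \<in> fst G"
  then show "(c(u := a)) x \<in> L x"
    using a coloringsD(1)[OF c, of x] L'[of x] by (cases "x = u") (auto simp: delv_def)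
next
  fix x assume "x \<notin> fst G"
  then show "(c(u := a)) x = 0" using uV coloringsD(2)[OF c, of x] by (auto simp: delv_def)
next
  fix e x y assume e: "e \<in> snd G" and xy: "x \<in> e" "y \<in> e" "x \<noteq> y"
  show "(c(u := a)) x \<noteq> (c(u := a)) y"
  proof (cases "u \<in> e")
    case False
    then have "e \<in> snd (delv G u)" using e by (simp add: delv_def)
    then show ?thesis using coloringsD(3)[OF c] xy False by auto
  next
    case True
    obtain z where z: "z \<noteq> u" "e = {u, z}" using simple_graph_edge[OF sg e True] by blast
    have "z \<in> nbrs (snd G) u" using e z unfolding nbrs_def by (simp add: insert_commute)
    then have "c z \<noteq> a" by (rule free)
    then show ?thesis using xy z by auto
  qed
qed

lemma coloring_restrict:
  assumes "c \<in> colorings G L" and "set us = nbrs (snd G) u"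
  shows "c(u := 0) \<in> colorings (delv G u) (lmod L us (length us) (c u))"
  unfolding colorings_def
proof (intro CollectI conjI ballI allI impI)
  fix x assume x: "x \<in> fst (delv G u)"
  then have xV: "x \<in> fst G" "x \<noteq> u" by (auto simp: delv_def)
  have "c x \<noteq> c u" if "x \<in> nbrs (snd G) u"
    using that coloringsD(3)[OF assms(1)] xV(2) unfolding nbrs_def by blast
  then show "(c(u := 0)) x \<in> lmod L us (length us) (c u) x"
    using coloringsD(1)[OF assms(1) xV(1)] xV(2) assms(2) unfolding lmod_def by auto
next
  fix x assume "x \<notin> fst (delv G u)"
  then show "(c(u := 0)) x = 0" using coloringsD(2)[OF assms(1)] by (auto simp: delv_def)
next
  fix e x y assume "e \<in> snd (delv G u)" "x \<in> e" "y \<in> e" "x \<noteq> y"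
  then show "(c(u := 0)) x \<noteq> (c(u := 0)) y"
    using coloringsD(3)[OF assms(1)] by (auto simp: delv_def)
qed

lemma card_colorings_at:
  assumes sg: "simple_graph G" and uV: "u \<in> fst G" and su: "set us = nbrs (snd G) u"
    and jL: "j \<in> L u"
  shows "card {c \<in> colorings G L. c u = j} = card (colorings (delv G u) (lmod L us (length us) j))"
proof (rule bij_betw_same_card[of "\<lambda>c. c(u := 0)"],
       rule bij_betw_byWitness[where f' = "\<lambda>d. d(u := j)"])
  let ?L' = "lmod L us (length us) j"
  have L': "?L' x = (if x \<in> nbrs (snd G) u then L x - {j} else L x)" for x
    unfolding lmod_def using su by simp
  show "\<forall>d\<in>colorings (delv G u) ?L'. (d(u := j))(u := 0) = d"
    using coloringsD(2) by (fastforce simp: delv_def)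
  show "(\<lambda>c. c(u := 0)) ` {c \<in> colorings G L. c u = j} \<subseteq> colorings (delv G u) ?L'"
    using coloring_restrict[OF _ su] by blast
  have "d(u := j) \<in> colorings G L" if d: "d \<in> colorings (delv G u) ?L'" for d
  proof (rule coloring_extend[OF sg uV d])
    show "?L' x \<subseteq> L x" for x by (rule lmod_subset)
    show "j \<in> L u" by (fact jL)
    fix z assume z: "z \<in> nbrs (snd G) u"
    then have "z \<in> fst (delv G u)"
      using nbrs_subset[OF sg] not_in_nbrs_self[OF sg] by (auto simp: delv_def)
    then have "d z \<in> ?L' z" by (rule coloringsD(1)[OF d])
    then show "d z \<noteq> j" using L'[of z] z by auto
  qed
  then show "(\<lambda>d. d(u := j)) ` colorings (delv G u) ?L' \<subseteq> {c \<in> colorings G L. c u = j}"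
    by auto
qed auto

lemma colorings_lmod_Suc:
  assumes "distinct us" and k: "k < length us" and "j \<noteq> 0"
  shows "colorings H (lmod L us (Suc k) j) = {c \<in> colorings H (lmod L us k j). c (us ! k) \<noteq> j}"
proof -
  let ?x = "us ! k"
  have "set (take (Suc k) us) = insert ?x (set (take k us))"
    using k by (simp add: take_Suc_conv_app_nth)
  then have L: "lmod L us (Suc k) j y = (if y = ?x then lmod L us k j y - {j} else lmod L us k j y)" for y
    using nth_not_in_take[OF assms(1) k] unfolding lmod_def by auto
  show ?thesis
  proof (intro set_eqI iffI)
    fix c assume c: "c \<in> colorings H (lmod L us (Suc k) j)"
    then have "c ?x \<noteq> j"
      using coloringsD(1,2)[OF c, of ?x] L[of ?x] assms(3) by (cases "?x \<in> fst H") auto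
    moreover have "c \<in> colorings H (lmod L us k j)"
      using c L unfolding colorings_def by (auto split: if_splits)
    ultimately show "c \<in> {c \<in> colorings H (lmod L us k j). c ?x \<noteq> j}" by simp
  next
    fix c assume "c \<in> {c \<in> colorings H (lmod L us k j). c ?x \<noteq> j}"
    then show "c \<in> colorings H (lmod L us (Suc k) j)"
      using L unfolding colorings_def by auto
  qed
qed

text \<open>Removing $j$ from the lists of the neighbours one at a time: each step keeps the
  fraction $1 - \Pr[c(u_k) = j]$ of the colourings.\<close>

lemma card_colorings_lmod:
  assumes "distinct us" and "j \<noteq> 0" and fin: "finite (colorings H L)" and "k \<le> length us"
  shows "real (card (colorings H (lmod L us k j))) =
         real (card (colorings H L)) * (\<Prod>m<k. (1 - prob H (lmod L us m j) (us ! m) j))"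
  using assms(4)
proof (induction k)
  case (Suc k)
  let ?A = "colorings H (lmod L us k j)"
  let ?S = "{c \<in> ?A. c (us ! k) = j}"
  have finA: "finite ?A"
    using finite_subset[OF colorings_mono[of "lmod L us k j" L H, OF lmod_subset] fin] .
  then have Sle: "card ?S \<le> card ?A" by (intro card_mono) auto
  have "colorings H (lmod L us (Suc k) j) = ?A - ?S"
    using colorings_lmod_Suc[OF assms(1) _ assms(2)] Suc.prems by auto
  then have "real (card (colorings H (lmod L us (Suc k) j))) = real (card ?A) - real (card ?S)"
    using finA Sle by (simp add: card_Diff_subset of_nat_diff)
  also have "\<dots> = real (card ?A) * (1 - prob H (lmod L us k j) (us ! k) j)"
    unfolding prob_def using Sle by (cases "card ?A = 0") (auto simp: field_simps)
  finally show ?case using Suc by simp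
qed simp

lemma card_colorings_sum:
  assumes "finite (colorings G L)" and "u \<in> fst G" and "finite (L u)"
  shows "card (colorings G L) = (\<Sum>j\<in>L u. card {c \<in> colorings G L. c u = j})"
proof -
  have "colorings G L = (\<Union>j\<in>L u. {c \<in> colorings G L. c u = j})"
    using coloringsD(1)[of _ G L u] assms(2) by blast
  also have "card \<dots> = (\<Sum>j\<in>L u. card {c \<in> colorings G L. c u = j})"
    by (rule card_UN_disjoint) (use assms in auto)
  finally show ?thesis .
qed

lemma prob_not_in_list: "u \<in> fst G \<Longrightarrow> j \<notin> L u \<Longrightarrow> prob G L u j = 0"
proof -
  assume "u \<in> fst G" "j \<notin> L u"
  then have "{c \<in> colorings G L. c u = j} = {}" using coloringsD(1)[of _ G L u] by blast
  then show ?thesis unfolding prob_def by (simp only: card.empty of_nat_0 div_0)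
qed

lemma colorings_nonempty:
  "simple_graph G \<Longrightarrow> (\<forall>u\<in>fst G. card (L u) \<ge> deg (snd G) u + 1) \<Longrightarrow> colorings G L \<noteq> {}"
proof (induction "card (fst G)" arbitrary: G rule: less_induct)
  case less
  show ?case
  proof (cases "fst G = {}")
    case True
    then have "(\<lambda>_. 0) \<in> colorings G L"
      using less.prems(1) unfolding colorings_def simple_graph_def by blast
    then show ?thesis by blast
  next
    case False
    then obtain v where vV: "v \<in> fst G" by blast
    have sg: "simple_graph G" by (fact less.prems(1))
    have "\<forall>u\<in>fst (delv G v). card (L u) \<ge> deg (snd (delv G v)) u + 1"
    proof
      fix u assume "u \<in> fst (delv G v)"
      then have "card (L u) \<ge> deg (snd G) u + 1" using less.prems(2) by (simp add: delv_def)
      then show "card (L u) \<ge> deg (snd (delv G v)) u + 1" using deg_delv_le[OF sg, of v u] by linarith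
    qed
    then obtain c where c: "c \<in> colorings (delv G v) L"
      using less.hyps[OF card_delv_less[OF sg vV] simple_graph_delv[OF sg]] by blast
    have "card (c ` nbrs (snd G) v) \<le> deg (snd G) v"
      unfolding deg_def using card_image_le[OF finite_nbrs[OF sg]] .
    then have "\<not> L v \<subseteq> c ` nbrs (snd G) v"
      using less.prems(2) vV card_mono[OF finite_imageI[OF finite_nbrs[OF sg]]] by fastforce
    then obtain a where "a \<in> L v" "a \<notin> c ` nbrs (snd G) v" by blast
    then have "c(v := a) \<in> colorings G L"
      by (intro coloring_extend[OF sg vV c]) auto
    then show ?thesis by blast
  qed
qed

lemma admissible_finite_colorings: "admissible G L \<Longrightarrow> finite (colorings G L)"
  using finite_colorings admissibleD(1) admissible_finite_list simple_graph_finite by metis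

lemma admissible_card_colorings_pos: "admissible G L \<Longrightarrow> card (colorings G L) > 0"
  using colorings_nonempty[of G L] admissibleD[of G L] admissible_finite_colorings[of G L]
  by (simp add: card_gt_0_iff)

lemma sum_prob:
  assumes "admissible G L" and "u \<in> fst G"
  shows "(\<Sum>j\<in>L u. prob G L u j) = 1"
  using card_colorings_sum[OF admissible_finite_colorings[OF assms(1)] assms(2)
      admissible_finite_list[OF assms]] admissible_card_colorings_pos[OF assms(1)]
  unfolding prob_def by (simp flip: sum_divide_distrib of_nat_sum)

definition avoid_prod ::
    "('a graph \<Rightarrow> 'a lists \<Rightarrow> 'a \<Rightarrow> nat \<Rightarrow> real) \<Rightarrow> 'a graph \<Rightarrow> 'a lists \<Rightarrow> 'a \<Rightarrow> 'a list \<Rightarrow> nat \<Rightarrow> real"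
  where "avoid_prod R G L u us j = (\<Prod>k<length us. (1 - R (delv G u) (lmod L us k j) (us ! k) j))"

lemma prob_eq_avoid_prod:
  assumes adm: "admissible G L" and uV: "u \<in> fst G" and "distinct us"
    and su: "set us = nbrs (snd G) u"
  shows "prob G L u i = (if i \<in> L u
           then avoid_prod prob G L u us i / (\<Sum>j\<in>L u. avoid_prod prob G L u us j) else 0)"
proof -
  have adm': "admissible (delv G u) L" using admissible_delv[OF adm] .
  let ?N = "real (card (colorings (delv G u) L))"
  have cnt: "real (card {c \<in> colorings G L. c u = j}) = ?N * avoid_prod prob G L u us j"
    if "j \<in> L u" for j
  proof -
    have "j \<noteq> 0" using admissibleD(2)[OF adm uV] that by auto
    then show ?thesis
      unfolding card_colorings_at[of G u us j L, OF admissibleD(1)[OF adm] uV su that] avoid_prod_def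
      using card_colorings_lmod[OF assms(3) _ admissible_finite_colorings[OF adm'] le_refl] by simp
  qed
  have tot: "real (card (colorings G L)) = ?N * (\<Sum>j\<in>L u. avoid_prod prob G L u us j)"
    unfolding card_colorings_sum[OF admissible_finite_colorings[OF adm] uV
        admissible_finite_list[OF adm uV]] of_nat_sum
    using cnt by (simp add: sum_distrib_left)
  show ?thesis
  proof (cases "i \<in> L u")
    case True
    have "prob G L u i = real (card {c \<in> colorings G L. c u = i}) / real (card (colorings G L))"
      by (simp add: prob_def)
    then show ?thesis using True cnt[OF True] tot admissible_card_colorings_pos[OF adm'] by simp
  qed (simp add: prob_not_in_list[OF uV])
qed

section \<open>One step of the recursion\<close>

definition nbr_order_kept :: "'a nbord \<Rightarrow> 'a graph \<Rightarrow> 'a lists \<Rightarrow> 'a \<Rightarrow> nat \<Rightarrow> bool" where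
  "nbr_order_kept nb G L v i = (let E = snd G; a = nb E v ! 0; b = nb E v ! 1 in
     deg E a \<ge> deg E b \<and> (deg E a = 1 \<and> deg E b = 1 \<longrightarrow> (i \<notin> L a \<longrightarrow> i \<notin> L b)))"

definition first_nbr :: "'a nbord \<Rightarrow> 'a graph \<Rightarrow> 'a lists \<Rightarrow> 'a \<Rightarrow> nat \<Rightarrow> 'a" where
  "first_nbr nb G L v i = (if nbr_order_kept nb G L v i then nb (snd G) v ! 0 else nb (snd G) v ! 1)"

definition second_nbr :: "'a nbord \<Rightarrow> 'a graph \<Rightarrow> 'a lists \<Rightarrow> 'a \<Rightarrow> nat \<Rightarrow> 'a" where
  "second_nbr nb G L v i = (if nbr_order_kept nb G L v i then nb (snd G) v ! 1 else nb (snd G) v ! 0)"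

definition first_marginal :: "'a nbord \<Rightarrow> ('a graph \<Rightarrow> 'a lists \<Rightarrow> 'a \<Rightarrow> nat \<Rightarrow> real)
    \<Rightarrow> 'a graph \<Rightarrow> 'a lists \<Rightarrow> 'a \<Rightarrow> 'a \<Rightarrow> nat \<Rightarrow> real" where
  "first_marginal nb R G L v v1 j = (if j \<notin> L v1 then 0 else
      avoid_prod R (delv G v) L v1 (nb (snd (delv G v)) v1) j /
      (\<Sum>w\<in>L v1. avoid_prod R (delv G v) L v1 (nb (snd (delv G v)) v1) w))"

definition second_marginal :: "('a graph \<Rightarrow> 'a lists \<Rightarrow> 'a \<Rightarrow> nat \<Rightarrow> real)
    \<Rightarrow> 'a graph \<Rightarrow> 'a lists \<Rightarrow> 'a \<Rightarrow> 'a \<Rightarrow> 'a \<Rightarrow> nat \<Rightarrow> real" where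
  "second_marginal R G L v v1 v2 j = R (delv G v) (lmod L [v1, v2] 1 j) v2 j"

lemma Pstep_not_in_list: "i \<notin> L v \<Longrightarrow> Pstep nb R G L v i = 0"
  unfolding Pstep_def by simp

lemma Pstep_deg0: "i \<in> L v \<Longrightarrow> deg (snd G) v = 0 \<Longrightarrow> Pstep nb R G L v i = 1 / real (card (L v))"
  unfolding Pstep_def by simp

lemma Pstep_deg1_card4: "i \<in> L v \<Longrightarrow> deg (snd G) v = 1 \<Longrightarrow> card (L v) = 4 \<Longrightarrow>
    Pstep nb R G L v i = (1 - R (delv G v) L (nb (snd G) v ! 0) i) / 3"
  unfolding Pstep_def by (simp add: Let_def)

lemma Pstep_deg1_card3: "i \<in> L v \<Longrightarrow> deg (snd G) v = 1 \<Longrightarrow> card (L v) = 3 \<Longrightarrow>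
    Pstep nb R G L v i = (1 - R (delv G v) L (nb (snd G) v ! 0) i) /
      (2 + R (delv G v) L (nb (snd G) v ! 0) (the_elem ({1..4} - L v)))"
  unfolding Pstep_def by (simp add: Let_def)

lemma Pstep_deg2:
  fixes nb :: "'a nbord" and R :: "'a graph \<Rightarrow> 'a lists \<Rightarrow> 'a \<Rightarrow> nat \<Rightarrow> real"
  assumes "i \<in> L v" "deg (snd G) v = 2"
  defines "f \<equiv> first_marginal nb R G L v (first_nbr nb G L v i)"
    and "y \<equiv> second_marginal R G L v (first_nbr nb G L v i) (second_nbr nb G L v i)"
  shows "Pstep nb R G L v i = (1 - f i) * (1 - y i) / (\<Sum>j\<in>L v. (1 - f j) * (1 - y j))"
proof -
  have "(i \<notin> L v) = False" "(deg (snd G) v = 0) = False" "(deg (snd G) v = 1) = False"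
    "(deg (snd G) v = 2) = True" using assms(1,2) by auto
  then show ?thesis
    unfolding Pstep_def f_def y_def first_marginal_def second_marginal_def avoid_prod_def
      first_nbr_def second_nbr_def nbr_order_kept_def Let_def if_True if_False
    by simp
qed

locale reachable_vertex =
  fixes nb :: "'a nbord" and G :: "'a graph" and L :: "'a lists" and v :: 'a
  assumes valid_nb: "valid_nb nb" and reachable: "reachable G L v"
begin

lemma admissible: "admissible G L"
  and v_in: "v \<in> fst G"
  and deg_le_2: "deg (snd G) v \<le> 2"
  and card_list: "card (L v) \<ge> deg (snd G) v + 2"
  using reachable unfolding reachable_iff by auto

lemma simple: "simple_graph G"
  using admissibleD(1)[OF admissible] .

lemma list_subset: "L v \<subseteq> {1..4}"
  using admissibleD(2)[OF admissible v_in] .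

lemma card_list_le_4: "card (L v) \<le> 4"
  using card_le_4[OF list_subset] .

lemma finite_list: "finite (L v)"
  using admissible_finite_list[OF admissible v_in] .

lemma nbs: "distinct (nb (snd G) v)" "set (nb (snd G) v) = nbrs (snd G) v"
  "length (nb (snd G) v) = deg (snd G) v"
  using valid_nb_nbrs[OF valid_nb simple] by auto

lemma card_delv: "card (fst (delv G v)) < card (fst G)"
  using card_delv_less[OF simple v_in] .

lemma admissible_delv: "admissible (delv G v) L"
  using admissible_delv[OF admissible] .

lemma reachable_nbr:
  "set us \<subseteq> nbrs (snd G) v \<Longrightarrow> distinct us \<Longrightarrow> k < length us \<Longrightarrow>
    reachable (delv G v) (lmod L us k j) (us ! k)"
  using reachable_nbr[OF admissible v_in] by blast

lemma reachable_nbr_deg1: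
  "deg (snd G) v = 1 \<Longrightarrow> reachable (delv G v) L (nb (snd G) v ! 0)"
  using reachable_nbr[of "nb (snd G) v" 0] nbs by simp

context
  fixes i :: nat
  assumes deg_2: "deg (snd G) v = 2"
begin

lemma list_full: "L v = {1..4}"
  using subset_card_4[OF list_subset] card_list deg_2 by simp

lemma nbr_pair: "first_nbr nb G L v i \<noteq> second_nbr nb G L v i"
  "set [first_nbr nb G L v i, second_nbr nb G L v i] = nbrs (snd G) v"
proof -
  let ?ns = "nb (snd G) v"
  have ns: "?ns = [?ns ! 0, ?ns ! 1]" using nbs(3) deg_2
    by (cases ?ns; cases "tl ?ns") auto
  then have "?ns ! 0 \<noteq> ?ns ! 1" using nbs(1) by (metis distinct_length_2_or_more)
  then show "first_nbr nb G L v i \<noteq> second_nbr nb G L v i"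
    unfolding first_nbr_def second_nbr_def by auto
  have "set ?ns = {?ns ! 0, ?ns ! 1}" by (subst ns) simp
  then show "set [first_nbr nb G L v i, second_nbr nb G L v i] = nbrs (snd G) v"
    unfolding first_nbr_def second_nbr_def nbs(2)[symmetric] by (auto simp: insert_commute)
qed

lemma reachable_first_nbr: "reachable (delv G v) L (first_nbr nb G L v i)"
  using reachable_nbr[of "[first_nbr nb G L v i, second_nbr nb G L v i]" 0] nbr_pair
  by auto

lemma reachable_second_nbr:
  "reachable (delv G v) (lmod L [first_nbr nb G L v i, second_nbr nb G L v i] 1 j) (second_nbr nb G L v i)"
  using reachable_nbr[of "[first_nbr nb G L v i, second_nbr nb G L v i]" 1] nbr_pair
  by auto

end

end

lemma reachable_vertexI: "valid_nb nb \<Longrightarrow> reachable G L v \<Longrightarrow> reachable_vertex nb G L v"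
  by (rule reachable_vertex.intro)

section \<open>Exactness of the recursion for the true marginals\<close>

lemma sum_prob_colours:
  assumes "admissible G L" and "u \<in> fst G"
  shows "(\<Sum>j\<in>{1..4}. prob G L u j) = 1"
proof -
  have "(\<Sum>j\<in>{1..4}. prob G L u j) = (\<Sum>j\<in>L u. prob G L u j)"
    using admissibleD(2)[OF assms] prob_not_in_list[OF assms(2)]
    by (intro sum.mono_neutral_right) auto
  then show ?thesis using sum_prob[OF assms] by simp
qed

context reachable_vertex
begin

lemma prob_eq_avoid_prod_at:
  "distinct us \<Longrightarrow> set us = nbrs (snd G) v \<Longrightarrow> prob G L v i =
    (if i \<in> L v then avoid_prod prob G L v us i / (\<Sum>j\<in>L v. avoid_prod prob G L v us j) else 0)"
  using prob_eq_avoid_prod[OF admissible v_in] .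

lemma prob_eq_Pstep_deg1:
  assumes deg_1: "deg (snd G) v = 1" and i: "i \<in> L v"
  shows "prob G L v i = Pstep nb prob G L v i"
proof -
  let ?v1 = "nb (snd G) v ! 0"
  let ?x = "\<lambda>j. prob (delv G v) L ?v1 j"
  have avoid: "avoid_prod prob G L v (nb (snd G) v) j = 1 - ?x j" for j
    unfolding avoid_prod_def using nbs(3) deg_1 by simp
  have "?v1 \<in> fst (delv G v)" using reachable_nbr_deg1[OF deg_1] unfolding reachable_iff by blast
  then have sum_x: "(\<Sum>j\<in>{1..4}. ?x j) = 1" by (rule sum_prob_colours[OF admissible_delv])
  have "card (L v) = 3 \<or> card (L v) = 4" using card_list card_list_le_4 deg_1 by linarith
  then show ?thesis
  proof
    assume card4: "card (L v) = 4"
    then have "(\<Sum>j\<in>L v. 1 - ?x j) = 3"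
      using subset_card_4[OF list_subset] sum_x by (simp add: sum_subtractf)
    then show ?thesis
      using prob_eq_avoid_prod_at[OF nbs(1,2)] i avoid Pstep_deg1_card4[of i L v G nb prob, OF i deg_1 card4] by simp
  next
    assume card3: "card (L v) = 3"
    then obtain m where m: "{1..4::nat} - L v = {m}"
      using card_Diff_subset[OF finite_list list_subset] card_1_singletonE by force
    then have Lv: "L v = {1..4} - {m}" and "m \<in> {1..4}" using list_subset by blast+
    then have "(\<Sum>j\<in>L v. 1 - ?x j) = 2 + ?x m"
      using sum_x card3 sum_diff1[of "{1..4::nat}" ?x m] by (simp add: sum_subtractf)
    then show ?thesis
      using prob_eq_avoid_prod_at[OF nbs(1,2)] i avoid Pstep_deg1_card3[of i L v G nb prob, OF i deg_1 card3] m
      by simp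
  qed
qed

lemma prob_eq_Pstep_deg2:
  assumes deg_2: "deg (snd G) v = 2" and i: "i \<in> L v"
  shows "prob G L v i = Pstep nb prob G L v i"
proof -
  let ?v1 = "first_nbr nb G L v i" and ?v2 = "second_nbr nb G L v i"
  let ?Gv = "delv G v"
  have v1: "?v1 \<in> fst ?Gv" using reachable_first_nbr[OF deg_2] unfolding reachable_iff by blast
  have "prob ?Gv L ?v1 j = first_marginal nb prob G L v ?v1 j" for j
    unfolding first_marginal_def
    using prob_eq_avoid_prod[OF admissible_delv v1 valid_nb_nbrs(1,2)[OF valid_nb simple_graph_delv[OF simple]]]
    by simp
  then have "avoid_prod prob G L v [?v1, ?v2] j =
      (1 - first_marginal nb prob G L v ?v1 j) * (1 - second_marginal prob G L v ?v1 ?v2 j)" for j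
    unfolding avoid_prod_def second_marginal_def by (simp add: numeral_2_eq_2)
  moreover have "distinct [?v1, ?v2]" using nbr_pair[OF deg_2] by simp
  ultimately show ?thesis
    using prob_eq_avoid_prod_at[of "[?v1, ?v2]"] nbr_pair[OF deg_2] i Pstep_deg2[of i L v G nb prob, OF i deg_2] by simp
qed

theorem prob_eq_Pstep: "prob G L v i = Pstep nb prob G L v i"
proof (cases "i \<in> L v")
  case True
  consider "deg (snd G) v = 0" | "deg (snd G) v = 1" | "deg (snd G) v = 2"
    using deg_le_2 by linarith
  then show ?thesis
  proof cases
    case 1
    then have "nb (snd G) v = []" using nbs(3) by simp
    then show ?thesis using prob_eq_avoid_prod_at[OF nbs(1,2)] True Pstep_deg0[of i L v G nb prob, OF True 1]
      unfolding avoid_prod_def by simp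
  qed (use prob_eq_Pstep_deg1 prob_eq_Pstep_deg2 True in auto)
qed (simp add: Pstep_not_in_list prob_not_in_list[OF v_in])

end

section \<open>The invariant and its arithmetic\<close>

text \<open>The invariant satisfied by the value \<open>r\<close> of both the procedure and the true marginal at a
  vertex of degree \<open>d\<close>, where \<open>inL\<close> says whether the colour is in the vertex's list.\<close>

definition marginal_bounds :: "nat \<Rightarrow> bool \<Rightarrow> real \<Rightarrow> bool" where
  "marginal_bounds d inL r \<longleftrightarrow> 0 \<le> r \<and> r \<le> 1/2 \<and> (r = 0 \<longleftrightarrow> \<not> inL) \<and> (r \<noteq> 0 \<longrightarrow> 1/13 \<le> r)
    \<and> (r \<noteq> 0 \<longrightarrow> d \<le> 1 \<longrightarrow> 1/6 \<le> r) \<and> (r = 1/2 \<or> r \<le> 13/27)"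

lemma marginal_boundsD:
  assumes "marginal_bounds d inL r"
  shows "0 \<le> r" "r \<le> 1/2" "r = 0 \<longleftrightarrow> \<not> inL" "inL \<Longrightarrow> 1/13 \<le> r" "inL \<Longrightarrow> d \<le> 1 \<Longrightarrow> 1/6 \<le> r"
    "r = 1/2 \<or> r \<le> 13/27"
  using assms unfolding marginal_bounds_def by auto

lemma marginal_bounds_interval:
  "marginal_bounds d inL r \<Longrightarrow> r \<in> {1/13..13/27} \<longleftrightarrow> r \<noteq> 0 \<and> r \<noteq> 1/2"
  unfolding marginal_bounds_def by auto

lemma marginal_bounds_deg1_card4: "0 \<le> x \<Longrightarrow> x \<le> 1/2 \<Longrightarrow> marginal_bounds 1 True ((1 - x) / 3)"
  unfolding marginal_bounds_def by (auto simp: field_simps)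

lemma marginal_bounds_deg1_card3:
  fixes x z :: real
  assumes "0 \<le> x" "x \<le> 1/2" "0 \<le> z" "z \<le> 1/2" "x \<noteq> 0 \<Longrightarrow> 1/13 \<le> x" "z \<noteq> 0 \<Longrightarrow> 1/13 \<le> z"
  shows "marginal_bounds 1 True ((1 - x) / (2 + z))" "(1 - x) / (2 + z) = 1/2 \<longleftrightarrow> x = 0 \<and> z = 0"
proof -
  let ?r = "(1 - x) / (2 + z)"
  have lo: "?r \<ge> 1/5" and hi: "?r \<le> 1/2" using assms by (simp_all add: field_simps)
  show half: "?r = 1/2 \<longleftrightarrow> x = 0 \<and> z = 0"
    using assms by (auto simp: field_simps)
  have "?r \<le> 13/27" if "x \<noteq> 0 \<or> z \<noteq> 0"
  proof -
    have "27 * x + 13 * z \<ge> 1" using assms that by (cases "x = 0") auto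
    then show ?thesis using assms by (simp add: field_simps)
  qed
  then have "?r = 1/2 \<or> ?r \<le> 13/27" using half by blast
  moreover have "?r \<noteq> 0" "0 \<le> ?r" "1/13 \<le> ?r" "1/6 \<le> ?r" using lo by linarith+
  ultimately show "marginal_bounds 1 True ?r" unfolding marginal_bounds_def using hi by blast
qed

text \<open>A neighbour of degree 1 with list $[4]\setminus\{i\}$, seen one level up: the estimate
  of colour \<open>j\<close> there is $(1 - x_j)/(2 + z)$ with $x_j$, $z$ the values of \<open>j\<close> and \<open>i\<close> at the next
  neighbour.\<close>

lemma deg1_value_le_6_13:
  fixes x z :: real
  assumes "0 \<le> x" "x \<le> 1/2" "z \<le> 1/2" "1/13 \<le> z" "13 * x + 6 * z \<ge> 1"
  shows "(1 - x) / (2 + z) \<le> 6/13"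
  using assms by (simp add: field_simps)

lemma prod_between_half_one:
  fixes g :: "nat \<Rightarrow> real"
  assumes "\<And>k. k < n \<Longrightarrow> 1/2 \<le> g k \<and> g k \<le> 1"
  shows "(1/2)^n \<le> (\<Prod>k<n. g k) \<and> (\<Prod>k<n. g k) \<le> 1"
  using assms
proof (induction n)
  case (Suc n)
  have ih: "(1/2)^n \<le> (\<Prod>k<n. g k)" "(\<Prod>k<n. g k) \<le> 1" using Suc by auto
  have gn: "1/2 \<le> g n" "g n \<le> 1" using Suc.prems[of n] by auto
  have "0 \<le> (\<Prod>k<n. g k)" using ih(1) zero_le_power[of "1/2::real" n] by linarith
  then have "(1/2)^n * (1/2) \<le> (\<Prod>k<n. g k) * g n"
    by (intro mult_mono) (use ih gn in auto)
  moreover have "(\<Prod>k<n. g k) * g n \<le> 1 * 1"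
    by (intro mult_mono) (use ih gn in auto)
  ultimately show ?case by (simp add: mult.commute)
qed simp

lemma normalized_weight_bounds:
  fixes p :: "nat \<Rightarrow> real"
  assumes fin: "finite S" and j: "j \<in> S" and p: "\<And>w. w \<in> S \<Longrightarrow> c \<le> p w \<and> p w \<le> 1"
    and c: "c > 0" and many: "(real (card S) - 1) * c \<ge> 3/4"
  shows "(\<Sum>w\<in>S. p w) > 0" "p j / (\<Sum>w\<in>S. p w) \<le> 4/7" "p j / (\<Sum>w\<in>S. p w) \<ge> c / real (card S)"
proof -
  let ?R = "\<Sum>w\<in>S - {j}. p w"
  have sum: "(\<Sum>w\<in>S. p w) = p j + ?R" using sum.remove[OF fin j] .
  have "?R \<ge> (\<Sum>w\<in>S - {j}. c)" by (rule sum_mono) (use p in auto)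
  moreover have "card S > 0" using fin j card_gt_0_iff by blast
  ultimately have R: "?R \<ge> (real (card S) - 1) * c" using fin j by (simp add: of_nat_diff)
  have pj: "c \<le> p j" "p j \<le> 1" using p[OF j] by auto
  show pos: "(\<Sum>w\<in>S. p w) > 0" using sum R pj c many by linarith
  have "p j / (p j + ?R) \<le> 4/7" using R many pj c by (simp add: field_simps)
  then show "p j / (\<Sum>w\<in>S. p w) \<le> 4/7" using sum by simp
  have "(\<Sum>w\<in>S. p w) \<le> real (card S)" using sum_mono[of S p "\<lambda>_. 1"] p by simp
  then show "p j / (\<Sum>w\<in>S. p w) \<ge> c / real (card S)"
    using pos pj c by (intro frac_le) auto
qed

lemma many_colours_bound: "m \<le> (2::nat) \<Longrightarrow> card S \<ge> m + 2 \<Longrightarrow> (real (card S) - 1) * (1/2)^m \<ge> 3/4"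
proof -
  assume m: "m \<le> 2" "card S \<ge> m + 2"
  have "3/4 \<le> (real m + 1) * (1/2)^m"
    using m(1) by (cases m; cases "m - 1") (auto simp: numeral_2_eq_2)
  also have "\<dots> \<le> (real (card S) - 1) * (1/2)^m"
    using m(2) by (intro mult_right_mono) simp_all
  finally show ?thesis .
qed

lemma fraction_bounds:
  fixes a B f y :: real
  assumes "0 \<le> f" "f \<le> 4/7" "0 \<le> y" "y \<le> 1/2"
    and a: "a = (1 - f) * (1 - y)" and "(2 + f) / 2 \<le> B" "B \<le> 2 + f"
  shows "1/13 \<le> a / (a + B)" "a / (a + B) \<le> 1/2"
    "f \<ge> 1/16 \<Longrightarrow> a / (a + B) \<le> 13/27" "y \<ge> 1/13 \<Longrightarrow> a / (a + B) \<le> 13/27"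
proof -
  have "(1 - f) * (1/2) \<le> a" "a \<le> (1 - f) * 1"
    unfolding a using assms by (auto intro: mult_left_mono)
  then have lo: "(1 - f) / 2 \<le> a" and hi: "a \<le> 1 - f" by simp_all
  then have pos: "a + B > 0" using assms(1,2,6) by argo
  show "1/13 \<le> a / (a + B)" using pos lo assms by (simp add: field_simps)
  show "a / (a + B) \<le> 1/2" using pos hi assms by (simp add: field_simps)
  show "f \<ge> 1/16 \<Longrightarrow> a / (a + B) \<le> 13/27" using pos hi assms by (simp add: field_simps)
  assume "y \<ge> 1/13"
  then have "a \<le> 1 * (12/13)" unfolding a using assms by (intro mult_mono) auto
  then show "a / (a + B) \<le> 13/27" using pos assms by (simp add: field_simps)
qed

text \<open>In case (c), with $f_i = y_i = 0$ the estimate is $1/(2 + \mathit{excess})$.\<close>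

definition excess :: "(nat \<Rightarrow> real) \<Rightarrow> (nat \<Rightarrow> real) \<Rightarrow> nat \<Rightarrow> real" where
  "excess f y i = (\<Sum>j\<in>{1..4} - {i}. (1 - f j) * (1/2 - y j))"

locale colour_weights =
  fixes i :: nat and f y :: "nat \<Rightarrow> real"
  assumes colour: "i \<in> {1..4}"
    and f: "\<And>j. j \<in> {1..4} \<Longrightarrow> 0 \<le> f j \<and> f j \<le> 4/7"
    and sum_f: "(\<Sum>j\<in>{1..4}. f j) = 1"
    and y: "\<And>j. j \<in> {1..4} \<Longrightarrow> 0 \<le> y j \<and> y j \<le> 1/2"
begin

lemma sum_others: "(\<Sum>j\<in>{1..4} - {i}. 1 - f j) = 2 + f i"
proof -
  have "(\<Sum>j\<in>{1..4} - {i}. f j) = 1 - f i" using sum.remove[of "{1..4}" i f] colour sum_f by simp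
  moreover have "card ({1..4::nat} - {i}) = 3" using colour by simp
  ultimately show ?thesis by (simp add: sum_subtractf)
qed

lemma excess_term_nonneg: "j \<in> {1..4} - {i} \<Longrightarrow> (1 - f j) * (1/2 - y j) \<ge> 0"
  using f[of j] y[of j] by (intro mult_nonneg_nonneg) auto

lemma excess_nonneg: "excess f y i \<ge> 0"
  unfolding excess_def using excess_term_nonneg by (intro sum_nonneg) auto

lemma excess_eq_0_iff: "excess f y i = 0 \<longleftrightarrow> (\<forall>j\<in>{1..4} - {i}. y j = 1/2)"
proof -
  have "excess f y i = 0 \<longleftrightarrow> (\<forall>j\<in>{1..4} - {i}. (1 - f j) * (1/2 - y j) = 0)"
    unfolding excess_def using excess_term_nonneg by (intro sum_nonneg_eq_0_iff) auto
  also have "\<dots> \<longleftrightarrow> (\<forall>j\<in>{1..4} - {i}. y j = 1/2)"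
  proof -
    have "1 - f j \<noteq> 0" if "j \<in> {1..4} - {i}" for j using f[of j] that by auto
    then show ?thesis by auto
  qed
  finally show ?thesis .
qed

lemma sum_others_eq: "(\<Sum>j\<in>{1..4} - {i}. (1 - f j) * (1 - y j)) = (2 + f i) / 2 + excess f y i"
proof -
  have "(\<Sum>j\<in>{1..4} - {i}. (1 - f j) * (1 - y j)) =
      (\<Sum>j\<in>{1..4} - {i}. (1 - f j) / 2 + (1 - f j) * (1/2 - y j))"
    by (rule sum.cong) (auto simp: algebra_simps)
  then show ?thesis using sum_others unfolding excess_def by (simp add: sum.distrib flip: sum_divide_distrib)
qed

lemma sum_others_le: "(\<Sum>j\<in>{1..4} - {i}. (1 - f j) * (1 - y j)) \<le> 2 + f i"
proof -
  have "(\<Sum>j\<in>{1..4} - {i}. (1 - f j) * (1 - y j)) \<le> (\<Sum>j\<in>{1..4} - {i}. 1 - f j)"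
  proof (rule sum_mono)
    fix j assume "j \<in> {1..4} - {i}"
    then have "0 \<le> 1 - f j" "0 \<le> y j" using f[of j] y[of j] by auto
    then show "(1 - f j) * (1 - y j) \<le> 1 - f j" by (simp add: mult_left_le)
  qed
  then show ?thesis using sum_others by simp
qed

lemma excess_ge_if_all_le:
  assumes "\<And>j. j \<in> {1..4} - {i} \<Longrightarrow> y j \<le> 6/13"
  shows "excess f y i \<ge> 1/13"
proof -
  have "(\<Sum>j\<in>{1..4} - {i}. (1 - f j) * (1/26)) \<le> excess f y i"
    unfolding excess_def
  proof (rule sum_mono)
    fix j assume j: "j \<in> {1..4} - {i}"
    then have "0 \<le> 1 - f j" "1/26 \<le> 1/2 - y j" using f[of j] assms[OF j] by auto
    then show "(1 - f j) * (1/26) \<le> (1 - f j) * (1/2 - y j)" by (rule mult_left_mono[rotated])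
  qed
  moreover have "(\<Sum>j\<in>{1..4} - {i}. (1 - f j) * (1/26)) = (2 + f i) * (1/26)"
    by (simp only: sum_distrib_right[symmetric] sum_others)
  ultimately show ?thesis using f[OF colour] by argo
qed

lemma excess_ge_if_zero:
  assumes "j0 \<in> {1..4} - {i}" "y j0 = 0"
  shows "excess f y i \<ge> 1/13"
proof -
  have "(1 - f j0) * (1/2 - y j0) \<le> excess f y i"
    unfolding excess_def using assms(1) excess_term_nonneg by (intro member_le_sum) auto
  then show ?thesis using assms f[of j0] by auto
qed

lemma excess_ge_if_two_le:
  assumes j: "j1 \<in> {1..4} - {i}" "j2 \<in> {1..4} - {i}" "j1 \<noteq> j2" and "y j1 \<le> 5/12" "y j2 \<le> 5/12"
  shows "excess f y i \<ge> 1/13"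
proof -
  let ?t = "\<lambda>j. (1 - f j) * (1/2 - y j)"
  have "(\<Sum>j\<in>{j1, j2}. ?t j) \<le> excess f y i"
    unfolding excess_def by (rule sum_mono2) (use j excess_term_nonneg in auto)
  then have "?t j1 + ?t j2 \<le> excess f y i" using j(3) by simp
  moreover have "(1 - f j1) / 12 \<le> ?t j1" "(1 - f j2) / 12 \<le> ?t j2"
    using assms f[of j1] f[of j2] mult_left_mono[of "1/12" "1/2 - y _" "1 - f _"] by auto
  moreover have "(\<Sum>j\<in>{j1, j2}. f j) \<le> (\<Sum>j\<in>{1..4}. f j)"
    by (rule sum_mono2) (use j f in auto)
  then have "f j1 + f j2 \<le> 1" using j(3) sum_f by simp
  ultimately show ?thesis by argo
qed

definition ratio :: real where
  "ratio = (1 - f i) * (1 - y i) / (\<Sum>j\<in>{1..4}. (1 - f j) * (1 - y j))"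

lemma ratio_eq: "ratio = (1 - f i) * (1 - y i) /
    ((1 - f i) * (1 - y i) + (\<Sum>j\<in>{1..4} - {i}. (1 - f j) * (1 - y j)))"
  unfolding ratio_def using sum.remove[of "{1..4}" i "\<lambda>j. (1 - f j) * (1 - y j)"] colour by simp

lemma ratio_bounds: "1/13 \<le> ratio" "ratio \<le> 1/2" "f i \<ge> 1/16 \<or> y i \<ge> 1/13 \<Longrightarrow> ratio \<le> 13/27"
proof -
  have B: "(2 + f i) / 2 \<le> (\<Sum>j\<in>{1..4} - {i}. (1 - f j) * (1 - y j))"
    using sum_others_eq excess_nonneg by linarith
  note fraction_bounds[OF _ _ _ _ refl B sum_others_le]
  then show "1/13 \<le> ratio" "ratio \<le> 1/2" "f i \<ge> 1/16 \<or> y i \<ge> 1/13 \<Longrightarrow> ratio \<le> 13/27"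
    unfolding ratio_eq using f[OF colour] y[OF colour] by auto
qed

lemma ratio_if_zero: "f i = 0 \<Longrightarrow> y i = 0 \<Longrightarrow> ratio = 1 / (2 + excess f y i)"
  unfolding ratio_eq using sum_others_eq by simp

end

section \<open>Preservation of the invariant\<close>

definition satisfies_bounds :: "nat \<Rightarrow> ('a graph \<Rightarrow> 'a lists \<Rightarrow> 'a \<Rightarrow> nat \<Rightarrow> real) \<Rightarrow> bool" where
  "satisfies_bounds n R \<longleftrightarrow> (\<forall>G L v i. reachable G L v \<longrightarrow> card (fst G) < n \<longrightarrow>
     marginal_bounds (deg (snd G) v) (i \<in> L v) (R G L v i))"

lemma satisfies_boundsD:
  "satisfies_bounds n R \<Longrightarrow> reachable G L v \<Longrightarrow> card (fst G) < n \<Longrightarrow>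
    marginal_bounds (deg (snd G) v) (i \<in> L v) (R G L v i)"
  unfolding satisfies_bounds_def by blast

lemma satisfies_bounds_mono: "satisfies_bounds n R \<Longrightarrow> m \<le> n \<Longrightarrow> satisfies_bounds m R"
  unfolding satisfies_bounds_def by auto

definition uniform_estimate :: "'a graph \<Rightarrow> 'a lists \<Rightarrow> 'a \<Rightarrow> nat \<Rightarrow> real" where
  "uniform_estimate G L v i = (if i \<notin> L v then 0 else 1 / real (card (L v)))"

lemma Pfuel_0: "Pfuel nb 0 = uniform_estimate"
  by (intro ext) (simp add: uniform_estimate_def)

lemma satisfies_bounds_uniform: "satisfies_bounds n uniform_estimate"
  unfolding satisfies_bounds_def
proof (intro allI impI)
  fix G L v i assume "reachable G L v"
  then have "card (L v) \<ge> 2" "card (L v) \<le> 4"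
    using admissibleD(2)[of G L v] card_le_4[of "L v"] unfolding reachable_iff by auto
  then have "card (L v) = 2 \<or> card (L v) = 3 \<or> card (L v) = 4" by linarith
  then show "marginal_bounds (deg (snd G) v) (i \<in> L v) (uniform_estimate G L v i)"
    unfolding marginal_bounds_def uniform_estimate_def by auto
qed

text \<open>What the degree-2 case needs to look two levels down: on instances with fewer than \<open>n\<close>
  vertices, \<open>R\<close> is the uniform estimate or one step of the recursion applied to some \<open>R'\<close>,
  both satisfying the invariant.\<close>

definition one_step_estimator ::
    "'a nbord \<Rightarrow> nat \<Rightarrow> ('a graph \<Rightarrow> 'a lists \<Rightarrow> 'a \<Rightarrow> nat \<Rightarrow> real) \<Rightarrow> bool" where
  "one_step_estimator nb n R \<longleftrightarrow> satisfies_bounds n R \<and>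
     ((\<forall>G L v i. reachable G L v \<longrightarrow> card (fst G) < n \<longrightarrow> R G L v i = uniform_estimate G L v i) \<or>
      (\<exists>R'. satisfies_bounds n R' \<and>
        (\<forall>G L v i. reachable G L v \<longrightarrow> card (fst G) < n \<longrightarrow> R G L v i = Pstep nb R' G L v i)))"

lemma one_step_estimator_bounds: "one_step_estimator nb n R \<Longrightarrow> satisfies_bounds n R"
  unfolding one_step_estimator_def by blast

lemma one_step_estimator_deg0:
  assumes R: "one_step_estimator nb n R" and v: "reachable G L v" "card (fst G) < n"
    and deg0: "deg (snd G) v = 0"
  shows "R G L v i = uniform_estimate G L v i"
proof -
  have Pstep: "Pstep nb R' G L v i = uniform_estimate G L v i" for R'
    using Pstep_deg0[of i L v G nb R', OF _ deg0] Pstep_not_in_list[of i L v nb R' G]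
    unfolding uniform_estimate_def by auto
  from R consider
      (uniform) "\<forall>G L v i. reachable G L v \<longrightarrow> card (fst G) < n \<longrightarrow> R G L v i = uniform_estimate G L v i"
    | (step) R' where "\<forall>G L v i. reachable G L v \<longrightarrow> card (fst G) < n \<longrightarrow> R G L v i = Pstep nb R' G L v i"
    unfolding one_step_estimator_def by blast
  then show ?thesis
  proof cases
    case uniform
    show ?thesis using uniform[rule_format, OF v] .
  next
    case (step R')
    show ?thesis using step[rule_format, OF v] Pstep by simp
  qed
qed

context reachable_vertex
begin

lemma bounds_nbr:
  assumes "satisfies_bounds (card (fst G)) R" and "reachable (delv G v) L' u"
  shows "marginal_bounds (deg (snd (delv G v)) u) (j \<in> L' u) (R (delv G v) L' u j)"
  using satisfies_boundsD[OF assms card_delv] .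

lemma Pstep_bounds_deg_le1:
  assumes R: "satisfies_bounds (card (fst G)) R" and deg: "deg (snd G) v \<le> 1"
  shows "marginal_bounds (deg (snd G) v) (i \<in> L v) (Pstep nb R G L v i)"
proof (cases "i \<in> L v")
  case i: True
  consider (deg0) "deg (snd G) v = 0" | (deg1) "deg (snd G) v = 1" using deg by linarith
  then show ?thesis
  proof cases
    case deg0
    then have "card (L v) = 2 \<or> card (L v) = 3 \<or> card (L v) = 4"
      using card_list card_list_le_4 by linarith
    then show ?thesis using Pstep_deg0[of i L v G nb R, OF i deg0] i deg0 unfolding marginal_bounds_def by auto
  next
    case deg1
    let ?x = "\<lambda>j. R (delv G v) L (nb (snd G) v ! 0) j"
    note x = marginal_boundsD[OF bounds_nbr[OF R reachable_nbr_deg1[OF deg1]]]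
    have "card (L v) = 3 \<or> card (L v) = 4" using card_list card_list_le_4 deg1 by linarith
    then show ?thesis
    proof
      assume card4: "card (L v) = 4"
      have "marginal_bounds 1 True ((1 - ?x i) / 3)"
        by (rule marginal_bounds_deg1_card4) (use x in auto)
      then show ?thesis unfolding Pstep_deg1_card4[of i L v G nb R, OF i deg1 card4] using deg1 i by simp
    next
      assume card3: "card (L v) = 3"
      let ?m = "the_elem ({1..4} - L v)"
      have "marginal_bounds 1 True ((1 - ?x i) / (2 + ?x ?m))"
        by (rule marginal_bounds_deg1_card3(1)) (use x in auto)
      then show ?thesis using Pstep_deg1_card3[of i L v G nb R, OF i deg1 card3] deg1 i by simp
    qed
  qed
qed (simp add: Pstep_not_in_list marginal_bounds_def)

text \<open>At a vertex of degree at most 1 the value 1/2 is attained exactly in a pattern determined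
  by the lists alone, whatever the input estimator.\<close>

definition half_pattern :: "nat \<Rightarrow> bool" where
  "half_pattern i \<longleftrightarrow> i \<in> L v \<and> (if deg (snd G) v = 0 then card (L v) = 2 else
     card (L v) = 3 \<and> i \<notin> L (nb (snd G) v ! 0) \<and> the_elem ({1..4} - L v) \<notin> L (nb (snd G) v ! 0))"

lemma Pstep_half_iff_deg_le1:
  assumes R: "satisfies_bounds (card (fst G)) R" and deg: "deg (snd G) v \<le> 1"
  shows "Pstep nb R G L v i = 1/2 \<longleftrightarrow> half_pattern i"
proof (cases "i \<in> L v")
  case i: True
  consider (deg0) "deg (snd G) v = 0" | (deg1) "deg (snd G) v = 1" using deg by linarith
  then show ?thesis
  proof cases
    case deg0
    then have "card (L v) = 2 \<or> card (L v) = 3 \<or> card (L v) = 4"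
      using card_list card_list_le_4 by linarith
    then show ?thesis using Pstep_deg0[of i L v G nb R, OF i deg0] i deg0 unfolding half_pattern_def by auto
  next
    case deg1
    let ?x = "\<lambda>j. R (delv G v) L (nb (snd G) v ! 0) j"
    note x = marginal_boundsD[OF bounds_nbr[OF R reachable_nbr_deg1[OF deg1]]]
    have "card (L v) = 3 \<or> card (L v) = 4" using card_list card_list_le_4 deg1 by linarith
    then show ?thesis
    proof
      assume "card (L v) = 4"
      then show ?thesis
        using Pstep_deg1_card4[of i L v G nb R, OF i deg1] x(1)[of i] deg1 unfolding half_pattern_def by simp
    next
      assume card3: "card (L v) = 3"
      let ?m = "the_elem ({1..4} - L v)"
      have "(1 - ?x i) / (2 + ?x ?m) = 1/2 \<longleftrightarrow> ?x i = 0 \<and> ?x ?m = 0"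
        by (rule marginal_bounds_deg1_card3(2)) (use x in auto)
      then show ?thesis
        using Pstep_deg1_card3[of i L v G nb R, OF i deg1 card3] x(3) i card3 deg1 unfolding half_pattern_def by simp
    qed
  qed
qed (simp add: Pstep_not_in_list half_pattern_def)

lemma Pstep_deg1_missing:
  assumes R: "satisfies_bounds (card (fst G)) R" and deg1: "deg (snd G) v = 1"
    and list: "L v = {1..4} - {i}" and i: "i \<in> {1..4}" and j: "j \<in> L v"
  defines "w \<equiv> nb (snd G) v ! 0"
  shows "i \<in> L w \<Longrightarrow> Pstep nb R G L v j \<le> 6/13"
    "i \<notin> L w \<Longrightarrow> j \<in> L w \<Longrightarrow> Pstep nb R G L v j \<le> 5/12"
    "i \<notin> L w \<Longrightarrow> j \<notin> L w \<Longrightarrow> Pstep nb R G L v j = 1/2"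
proof -
  let ?H = "delv G v"
  let ?x = "R ?H L w j" and ?z = "R ?H L w i"
  have reach_w: "reachable ?H L w" using reachable_nbr_deg1[OF deg1] unfolding w_def .
  note x = marginal_boundsD[OF bounds_nbr[OF R reach_w, of j]]
  note z = marginal_boundsD[OF bounds_nbr[OF R reach_w, of i]]
  have "the_elem ({1..4} - L v) = i" using list i by (simp add: Diff_Diff_Int)
  moreover have "card (L v) = 3" using list i by simp
  ultimately have P: "Pstep nb R G L v j = (1 - ?x) / (2 + ?z)"
    using Pstep_deg1_card3[of j L v G nb R, OF j deg1] unfolding w_def by simp
  have w: "L w \<subseteq> {1..4}" "card (L w) \<ge> deg (snd ?H) w + 2" "deg (snd ?H) w \<le> 2"
    using reach_w admissibleD(2)[of ?H L w] unfolding reachable_iff by auto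
  show "Pstep nb R G L v j \<le> 6/13" if iw: "i \<in> L w"
  proof -
    have "13 * ?x + 6 * ?z \<ge> 1"
    proof (cases "deg (snd ?H) w \<le> 1")
      case False
      then have "L w = {1..4}" using subset_card_4[OF w(1)] w(2) by simp
      then show ?thesis using x(1,4) z(1) j list by auto
    qed (use z(5) iw x(1) in auto)
    then show ?thesis unfolding P using x(1,2) z(2,4) iw by (intro deg1_value_le_6_13) auto
  qed
  assume iw: "i \<notin> L w"
  then have "L w \<subseteq> {1..4} - {i}" using w(1) by blast
  then have "deg (snd ?H) w \<le> 1" using card_mono[of "{1..4} - {i}" "L w"] w(2) i by simp
  then show "j \<in> L w \<Longrightarrow> Pstep nb R G L v j \<le> 5/12" unfolding P using x(5) z(3) iw by simp
  show "j \<notin> L w \<Longrightarrow> Pstep nb R G L v j = 1/2" unfolding P using x(3) z(3) iw by simp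
qed

end

context reachable_vertex
begin

context
  fixes R :: "'a graph \<Rightarrow> 'a lists \<Rightarrow> 'a \<Rightarrow> nat \<Rightarrow> real" and i :: nat
  assumes deg_2: "deg (snd G) v = 2" and R: "satisfies_bounds (card (fst G)) R"
begin

abbreviation v1 where "v1 \<equiv> first_nbr nb G L v i"
abbreviation v2 where "v2 \<equiv> second_nbr nb G L v i"
abbreviation f where "f \<equiv> first_marginal nb R G L v v1"
abbreviation y where "y \<equiv> second_marginal R G L v v1 v2"

text \<open>Each factor $1 - R(\ldots)$ of the products defining \<open>f\<close> lies in $[1/2, 1]$, and \<open>v1\<close> has
  at least $\deg + 2$ colours, which is what the normalisation bound needs.\<close>

lemma first_marginal_bounds:
  "0 \<le> f j \<and> f j \<le> 4/7" "f j = 0 \<longleftrightarrow> j \<notin> L v1" "j \<in> L v1 \<Longrightarrow> 1/16 \<le> f j"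
  "(\<Sum>j\<in>{1..4}. f j) = 1"
proof -
  interpret v1: reachable_vertex nb "delv G v" L v1
    using valid_nb reachable_first_nbr[OF deg_2] by (rule reachable_vertexI)
  let ?us = "nb (snd (delv G v)) v1"
  let ?p = "avoid_prod R (delv G v) L v1 ?us"
  let ?c = "(1/2::real) ^ length ?us"
  have p: "?c \<le> ?p w \<and> ?p w \<le> 1" for w
    unfolding avoid_prod_def
  proof (rule prod_between_half_one)
    fix k assume "k < length ?us"
    then have "reachable (delv (delv G v) v1) (lmod L ?us k w) (?us ! k)"
      using v1.reachable_nbr v1.nbs by simp
    moreover have "card (fst (delv (delv G v) v1)) < card (fst G)"
      using v1.card_delv card_delv by linarith
    ultimately show "1/2 \<le> 1 - R (delv (delv G v) v1) (lmod L ?us k w) (?us ! k) w \<and>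
        1 - R (delv (delv G v) v1) (lmod L ?us k w) (?us ! k) w \<le> 1"
      using marginal_boundsD(1,2)[OF satisfies_boundsD[OF R]] by fastforce
  qed
  have "(1/2::real)^2 \<le> ?c" by (rule power_decreasing) (use v1.nbs(3) v1.deg_le_2 in auto)
  then have c: "?c \<ge> 1/4" by (simp add: power2_eq_square)
  have many: "(real (card (L v1)) - 1) * ?c \<ge> 3/4"
    using many_colours_bound v1.nbs(3) v1.deg_le_2 v1.card_list by simp
  have "?c > 0" by simp
  note W = normalized_weight_bounds[where p = ?p and c = ?c, OF v1.finite_list _ p this many]
  have f: "f j = (if j \<notin> L v1 then 0 else ?p j / (\<Sum>w\<in>L v1. ?p w))" for j
    unfolding first_marginal_def ..
  show "0 \<le> f j \<and> f j \<le> 4/7"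
  proof (cases "j \<in> L v1")
    case True
    then show ?thesis using f W(1,2)[OF True] p[of j] c by simp
  qed (simp add: f)
  have low: "1/16 \<le> f j" if j: "j \<in> L v1"
  proof -
    have "(1/4) / 4 \<le> ?c / real (card (L v1))"
      using c v1.card_list_le_4 v1.card_list by (intro frac_le) auto
    then have "1/16 \<le> ?p j / (\<Sum>w\<in>L v1. ?p w)" using W(3)[OF j] by linarith
    then show ?thesis using f j by simp
  qed
  then show "j \<in> L v1 \<Longrightarrow> 1/16 \<le> f j" .
  show "f j = 0 \<longleftrightarrow> j \<notin> L v1" using f low by auto
  obtain j0 where "j0 \<in> L v1" using v1.card_list by fastforce
  have "(\<Sum>j\<in>{1..4}. f j) = (\<Sum>j\<in>L v1. f j)"
    by (rule sum.mono_neutral_right) (use v1.list_subset f in auto)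
  also have "\<dots> = (\<Sum>j\<in>L v1. ?p j / (\<Sum>w\<in>L v1. ?p w))" using f by simp
  also have "\<dots> = 1" using W(1)[OF \<open>j0 \<in> L v1\<close>] by (simp flip: sum_divide_distrib)
  finally show "(\<Sum>j\<in>{1..4}. f j) = 1" .
qed

lemma list_second_nbr: "lmod L [v1, v2] 1 j v2 = L v2"
  unfolding lmod_pair using nbr_pair(1)[OF deg_2, of i] by simp

lemma second_marginal_bounds: "marginal_bounds (deg (snd (delv G v)) v2) (j \<in> L v2) (y j)"
  using bounds_nbr[OF R reachable_second_nbr[OF deg_2, of i j]] list_second_nbr
  unfolding second_marginal_def by simp

lemma colour_weights: "i \<in> L v \<Longrightarrow> colour_weights i f y"
  using list_subset first_marginal_bounds marginal_boundsD(1,2)[OF second_marginal_bounds]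
  by unfold_locales auto

lemma Pstep_deg2_eq_ratio:
  assumes i: "i \<in> L v"
  shows "Pstep nb R G L v i = colour_weights.ratio i f y"
proof -
  interpret colour_weights i f y using colour_weights[OF i] .
  show ?thesis using Pstep_deg2[of i L v G nb R] i deg_2 list_full[OF deg_2] ratio_def by simp
qed

lemma Pstep_deg2_half_iff:
  assumes i: "i \<in> L v"
  shows "Pstep nb R G L v i = 1/2 \<longleftrightarrow> i \<notin> L v1 \<and> i \<notin> L v2 \<and> (\<forall>j\<in>{1..4} - {i}. y j = 1/2)"
proof -
  interpret colour_weights i f y using colour_weights[OF i] .
  have f0: "f i = 0 \<longleftrightarrow> i \<notin> L v1" using first_marginal_bounds(2) .
  have y0: "y i = 0 \<longleftrightarrow> i \<notin> L v2" using marginal_boundsD(3)[OF second_marginal_bounds] .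
  show ?thesis
  proof (cases "f i = 0 \<and> y i = 0")
    case True
    then have "ratio = 1/2 \<longleftrightarrow> excess f y i = 0"
      using ratio_if_zero excess_nonneg by (auto simp: field_simps)
    then show ?thesis using True f0 y0 excess_eq_0_iff Pstep_deg2_eq_ratio[OF i] by simp
  next
    case False
    then have "f i \<ge> 1/16 \<or> y i \<ge> 1/13"
      using first_marginal_bounds(3) marginal_boundsD(4)[OF second_marginal_bounds] f0 y0 by blast
    then show ?thesis using False f0 y0 ratio_bounds(3) Pstep_deg2_eq_ratio[OF i] by auto
  qed
qed


lemma second_nbr_deg_le1:
  assumes "i \<in> {1..4}" "i \<notin> L v2"
  shows "deg (snd (delv G v)) v2 \<le> 1" "card (L v2) \<ge> deg (snd (delv G v)) v2 + 2"
    "L v2 \<subseteq> {1..4} - {i}"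
proof -
  have "v2 \<in> fst G" using nbr_pair(2)[OF deg_2, of i] nbrs_subset[OF simple] by auto
  then show L2: "L v2 \<subseteq> {1..4} - {i}" using admissibleD(2)[OF admissible] assms(2) by blast
  show card: "card (L v2) \<ge> deg (snd (delv G v)) v2 + 2"
    using reachable_second_nbr[OF deg_2, of i 0] list_second_nbr unfolding reachable_iff by simp
  show "deg (snd (delv G v)) v2 \<le> 1"
    using card card_mono[OF _ L2] assms(1) by simp
qed

lemma excess_large_deg0:
  assumes E: "one_step_estimator nb (card (fst G)) R" and i: "i \<in> L v" and not2: "i \<notin> L v2"
    and deg0: "deg (snd (delv G v)) v2 = 0"
  shows "excess f y i \<ge> 1/13"
proof -
  interpret colour_weights i f y using colour_weights[OF i] .
  note v2 = second_nbr_deg_le1[OF colour not2]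
  have y: "y j = (if j \<in> L v2 then 1 / real (card (L v2)) else 0)" for j
    using one_step_estimator_deg0[OF E reachable_second_nbr[OF deg_2] card_delv deg0] list_second_nbr
    unfolding second_marginal_def uniform_estimate_def by simp
  have "card (L v2) \<le> 3" using card_mono[OF _ v2(3)] colour by simp
  then consider "card (L v2) = 3" | "card (L v2) = 2" using v2(2) deg0 by linarith
  then show ?thesis
  proof cases
    case 1
    then have "L v2 = {1..4} - {i}" using subset_card_3[OF v2(3) colour] by simp
    then show ?thesis using y 1 by (intro excess_ge_if_all_le) simp
  next
    case 2
    then have "\<not> {1..4} - {i} \<subseteq> L v2"
      using card_mono[OF admissible_finite_list[OF admissible_delv], of v2 "{1..4} - {i}"]
        colour reachable_second_nbr[OF deg_2, of i 0] list_second_nbr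
      unfolding reachable_iff by auto
    then obtain j0 where "j0 \<in> {1..4} - {i}" "j0 \<notin> L v2" by blast
    then show ?thesis using y by (intro excess_ge_if_zero) auto
  qed
qed

text \<open>If \<open>v2\<close> keeps a neighbour \<open>w\<close> in $G_v$ and \<open>R\<close> unfolds there, each $y_j$ is read off at
  \<open>w\<close>. Either $w = v_1$, whose list lacks both \<open>i\<close> and \<open>j\<close> (so $y_j = 1/2$ throughout), or the
  list at \<open>w\<close> does not depend on \<open>j\<close>, and \<open>Pstep_deg1_missing\<close> bounds the $y_j$.\<close>

lemma excess_large_or_half_deg1:
  assumes i: "i \<in> L v" and not1: "i \<notin> L v1" and not2: "i \<notin> L v2"
    and deg1: "deg (snd (delv G v)) v2 = 1"
    and R': "satisfies_bounds (card (fst (delv G v))) R'"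
    and y_eq: "\<And>j. y j = Pstep nb R' (delv G v) (lmod L [v1, v2] 1 j) v2 j"
  shows "(\<forall>j\<in>{1..4} - {i}. y j = 1/2) \<or> excess f y i \<ge> 1/13"
proof -
  interpret colour_weights i f y using colour_weights[OF i] .
  note v2 = second_nbr_deg_le1[OF colour not2]
  let ?Lj = "\<lambda>j. lmod L [v1, v2] 1 j"
  let ?w = "nb (snd (delv G v)) v2 ! 0"
  have L2: "?Lj j v2 = {1..4} - {i}" for j
    using subset_card_3[OF v2(3) colour] v2(2) deg1 list_second_nbr by simp
  interpret u: reachable_vertex nb "delv G v" "?Lj j" v2 for j
    using valid_nb reachable_second_nbr[OF deg_2] by (rule reachable_vertexI)
  note bound = u.Pstep_deg1_missing[OF R' deg1 L2 colour]
  have Lw: "?Lj j ?w = (if ?w = v1 then L v1 - {j} else L ?w)" for j unfolding lmod_pair by simp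
  show ?thesis
  proof (cases "?w = v1")
    case True
    then have "y j = 1/2" if "j \<in> {1..4} - {i}" for j
      using bound(3) that L2 Lw not1 y_eq by simp
    then show ?thesis by blast
  next
    case False
    show ?thesis
    proof (cases "i \<in> L ?w")
      case True
      have "y j \<le> 6/13" if "j \<in> {1..4} - {i}" for j
        using bound(1)[of j j] that L2 Lw False True y_eq by simp
      then show ?thesis using excess_ge_if_all_le by blast
    next
      case iw: False
      have "card (L ?w) \<ge> 2"
        using u.reachable_nbr_deg1[OF deg1, of 0] Lw[of 0] False unfolding reachable_iff by simp
      moreover have Lw_sub: "L ?w \<subseteq> {1..4} - {i}"
        using u.reachable_nbr_deg1[OF deg1, of 0] Lw[of 0] False iw admissibleD(2)
        unfolding reachable_iff by fastforce
      ultimately have "\<not> (\<forall>a\<in>L ?w. \<forall>b\<in>L ?w. a = b)"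
        using card_le_Suc0_iff_eq[OF finite_subset[OF Lw_sub]] by auto
      then obtain j1 j2 where j12: "j1 \<in> L ?w" "j2 \<in> L ?w" "j1 \<noteq> j2" by blast
      have "y j \<le> 5/12" if "j \<in> L ?w" for j
      proof -
        have "j \<in> {1..4} - {i}" using that Lw_sub by blast
        then show ?thesis using bound(2)[of j j] that L2 Lw False iw y_eq by simp
      qed
      then show ?thesis
        using j12 Lw_sub by (intro disjI2 excess_ge_if_two_le) auto
    qed
  qed
qed

lemma excess_large_or_half:
  assumes E: "one_step_estimator nb (card (fst G)) R"
    and i: "i \<in> L v" and not1: "i \<notin> L v1" and not2: "i \<notin> L v2"
  shows "(\<forall>j\<in>{1..4} - {i}. y j = 1/2) \<or> excess f y i \<ge> 1/13"
proof -
  interpret colour_weights i f y using colour_weights[OF i] .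
  note v2 = second_nbr_deg_le1[OF colour not2]
  let ?Lj = "\<lambda>j. lmod L [v1, v2] 1 j"
  have reach: "reachable (delv G v) (?Lj j) v2" for j using reachable_second_nbr[OF deg_2] .
  consider (deg0) "deg (snd (delv G v)) v2 = 0" | (deg1) "deg (snd (delv G v)) v2 = 1"
    using v2(1) by linarith
  then show ?thesis
  proof cases
    case deg0
    then show ?thesis using excess_large_deg0[OF E i not2] by blast
  next
    case deg1
    from E consider
        (uniform) "\<forall>H M u j. reachable H M u \<longrightarrow> card (fst H) < card (fst G) \<longrightarrow>
           R H M u j = uniform_estimate H M u j"
      | (step) R' where "satisfies_bounds (card (fst G)) R'"
          "\<forall>H M u j. reachable H M u \<longrightarrow> card (fst H) < card (fst G) \<longrightarrow>
           R H M u j = Pstep nb R' H M u j"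
      unfolding one_step_estimator_def by blast
    then show ?thesis
    proof cases
      case uniform
      have "L v2 = {1..4} - {i}" using subset_card_3[OF v2(3) colour] v2(2) deg1 by simp
      then have "y j = 1/3" if "j \<in> {1..4} - {i}" for j
        using uniform[rule_format, OF reach card_delv] that colour list_second_nbr
        unfolding second_marginal_def uniform_estimate_def by simp
      then show ?thesis using excess_ge_if_all_le by force
    next
      case (step R')
      show ?thesis
      proof (rule excess_large_or_half_deg1[OF i not1 not2 deg1])
        show "satisfies_bounds (card (fst (delv G v))) R'"
          using satisfies_bounds_mono[OF step(1)] card_delv by simp
        show "y j = Pstep nb R' (delv G v) (?Lj j) v2 j" for j
          using step(2)[rule_format, OF reach card_delv] unfolding second_marginal_def .
      qed
    qed
  qed
qed

lemma Pstep_deg2_bounds: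
  assumes E: "one_step_estimator nb (card (fst G)) R" and i: "i \<in> L v"
  shows "marginal_bounds 2 True (Pstep nb R G L v i)"
proof -
  interpret colour_weights i f y using colour_weights[OF i] .
  have "ratio = 1/2 \<or> ratio \<le> 13/27"
  proof (cases "f i = 0 \<and> y i = 0")
    case True
    then have "i \<notin> L v1" "i \<notin> L v2"
      using first_marginal_bounds(2) marginal_boundsD(3)[OF second_marginal_bounds] by auto
    then have "excess f y i = 0 \<or> excess f y i \<ge> 1/13"
      using excess_large_or_half[OF E i] excess_eq_0_iff by blast
    moreover have "1 / (2 + e) \<le> 13/27" if "e \<ge> 1/13" for e :: real
      using that by (simp add: field_simps)
    ultimately show ?thesis using ratio_if_zero True by auto
  next
    case False
    then have "f i \<ge> 1/16 \<or> y i \<ge> 1/13"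
      using first_marginal_bounds(2,3) marginal_boundsD(3,4)[OF second_marginal_bounds] by blast
    then show ?thesis using ratio_bounds(3) by blast
  qed
  then show ?thesis
    using ratio_bounds(1,2) Pstep_deg2_eq_ratio[OF i] unfolding marginal_bounds_def by auto
qed

end

end

lemma (in reachable_vertex) Pstep_bounds:
  assumes E: "one_step_estimator nb (card (fst G)) R"
  shows "marginal_bounds (deg (snd G) v) (i \<in> L v) (Pstep nb R G L v i)"
proof (cases "deg (snd G) v \<le> 1")
  case True
  then show ?thesis using Pstep_bounds_deg_le1 one_step_estimator_bounds[OF E] by blast
next
  case False
  then have deg_2: "deg (snd G) v = 2" using deg_le_2 by linarith
  show ?thesis
  proof (cases "i \<in> L v")
    case True
    then show ?thesis
      using Pstep_deg2_bounds[OF deg_2 one_step_estimator_bounds[OF E] E] deg_2 by simp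
  qed (simp add: Pstep_not_in_list marginal_bounds_def)
qed

lemma one_step_estimator_Pfuel:
  fixes nb :: "'a nbord"
  assumes "valid_nb nb"
  shows "one_step_estimator nb n (Pfuel nb m)"
proof (induction m arbitrary: n)
  case 0
  show ?case unfolding one_step_estimator_def Pfuel_0 using satisfies_bounds_uniform by blast
next
  case (Suc m)
  have "satisfies_bounds n (Pfuel nb (Suc m))"
    unfolding satisfies_bounds_def
  proof (intro allI impI)
    fix G :: "'a graph" and L v i assume "reachable G L v"
    with assms interpret reachable_vertex nb G L v by (rule reachable_vertexI)
    show "marginal_bounds (deg (snd G) v) (i \<in> L v) (Pfuel nb (Suc m) G L v i)"
      using Pstep_bounds[OF Suc.IH] by simp
  qed
  moreover have "satisfies_bounds n (Pfuel nb m)"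
    using Suc.IH one_step_estimator_bounds by blast
  ultimately show ?case unfolding one_step_estimator_def by auto
qed

lemma one_step_estimator_prob:
  fixes nb :: "'a nbord"
  assumes "valid_nb nb" and "satisfies_bounds n (prob :: 'a graph \<Rightarrow> 'a lists \<Rightarrow> 'a \<Rightarrow> nat \<Rightarrow> real)"
  shows "one_step_estimator nb n prob"
  unfolding one_step_estimator_def
proof (intro conjI disjI2 exI[of _ prob] allI impI)
  fix G :: "'a graph" and L v i assume "reachable G L v"
  then show "prob G L v i = Pstep nb prob G L v i"
    by (intro reachable_vertex.prob_eq_Pstep reachable_vertexI[OF assms(1)])
qed (fact assms(2))+

lemma satisfies_bounds_prob:
  fixes nb :: "'a nbord"
  assumes "valid_nb nb"
  shows "satisfies_bounds n (prob :: 'a graph \<Rightarrow> 'a lists \<Rightarrow> 'a \<Rightarrow> nat \<Rightarrow> real)"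
proof (induction n)
  case 0
  show ?case unfolding satisfies_bounds_def by simp
next
  case (Suc n)
  show ?case
    unfolding satisfies_bounds_def
  proof (intro allI impI)
    fix G :: "'a graph" and L v i assume G: "reachable G L v" "card (fst G) < Suc n"
    from assms G(1) interpret reachable_vertex nb G L v by (rule reachable_vertexI)
    have "one_step_estimator nb (card (fst G)) prob"
      using one_step_estimator_prob[OF assms satisfies_bounds_mono[OF Suc.IH]] G(2) by simp
    then show "marginal_bounds (deg (snd G) v) (i \<in> L v) (prob G L v i)"
      using Pstep_bounds prob_eq_Pstep by simp
  qed
qed

section \<open>The value 1/2\<close>

context reachable_vertex
begin

text \<open>Whether one step of the recursion returns 1/2 is decided by the zero pattern two levels
  down, so any two inputs that themselves unfold one step agree on it.\<close>

lemma Pstep_half_iff_same: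
  assumes R1: "satisfies_bounds (card (fst G)) R1" "satisfies_bounds (card (fst G)) R1'"
    "\<And>H M u j. reachable H M u \<Longrightarrow> card (fst H) < card (fst G) \<Longrightarrow> R1 H M u j = Pstep nb R1' H M u j"
  assumes R2: "satisfies_bounds (card (fst G)) R2" "satisfies_bounds (card (fst G)) R2'"
    "\<And>H M u j. reachable H M u \<Longrightarrow> card (fst H) < card (fst G) \<Longrightarrow> R2 H M u j = Pstep nb R2' H M u j"
  shows "Pstep nb R1 G L v i = 1/2 \<longleftrightarrow> Pstep nb R2 G L v i = 1/2"
proof (cases "deg (snd G) v \<le> 1")
  case True
  then show ?thesis using Pstep_half_iff_deg_le1 R1(1) R2(1) by blast
next
  case False
  then have deg_2: "deg (snd G) v = 2" using deg_le_2 by linarith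
  show ?thesis
  proof (cases "i \<in> L v")
    case i: True
    let ?v1 = "first_nbr nb G L v i" and ?v2 = "second_nbr nb G L v i"
    let ?Lj = "\<lambda>j. lmod L [?v1, ?v2] 1 j"
    have "second_marginal R1 G L v ?v1 ?v2 j = 1/2 \<longleftrightarrow> second_marginal R2 G L v ?v1 ?v2 j = 1/2"
      if not2: "i \<notin> L ?v2" for j
    proof -
      have reach: "reachable (delv G v) (?Lj j) ?v2" using reachable_second_nbr[OF deg_2] .
      interpret u: reachable_vertex nb "delv G v" "?Lj j" ?v2
        using valid_nb reach by (rule reachable_vertexI)
      have deg: "deg (snd (delv G v)) ?v2 \<le> 1"
        using second_nbr_deg_le1[OF deg_2 R1(1) _ not2] list_subset i by blast
      have "satisfies_bounds (card (fst (delv G v))) R1'" "satisfies_bounds (card (fst (delv G v))) R2'"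
        using satisfies_bounds_mono R1(2) R2(2) card_delv by (blast intro: less_imp_le)+
      then show ?thesis
        using u.Pstep_half_iff_deg_le1[OF _ deg] R1(3)[OF reach card_delv] R2(3)[OF reach card_delv]
        unfolding second_marginal_def by simp
    qed
    then show ?thesis
      using Pstep_deg2_half_iff[OF deg_2 R1(1) i] Pstep_deg2_half_iff[OF deg_2 R2(1) i] by blast
  qed (simp add: Pstep_not_in_list)
qed

text \<open>With at least two levels of recursion the procedure sees that pattern exactly.\<close>

lemma Pfuel_same_as_prob:
  fixes k i :: nat
  defines "q \<equiv> Pfuel nb (Suc (Suc k)) G L v i" and "p \<equiv> prob G L v i"
  shows "(q = 0 \<longleftrightarrow> p = 0) \<and> (q = 1/2 \<longleftrightarrow> p = 1/2) \<and>
    (q \<in> {1/13..13/27} \<longleftrightarrow> p \<in> {1/13..13/27})"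
proof -
  have bounds: "satisfies_bounds n (Pfuel nb m)" "satisfies_bounds n (prob :: 'a graph \<Rightarrow> _)" for n m
    using one_step_estimator_bounds[OF one_step_estimator_Pfuel[OF valid_nb]]
      satisfies_bounds_prob[OF valid_nb] by blast+
  have q: "marginal_bounds (deg (snd G) v) (i \<in> L v) q"
    and p: "marginal_bounds (deg (snd G) v) (i \<in> L v) p"
    unfolding q_def p_def
    using satisfies_boundsD[OF bounds(1) reachable lessI] satisfies_boundsD[OF bounds(2) reachable lessI]
    by blast+
  have zero: "q = 0 \<longleftrightarrow> p = 0" using marginal_boundsD(3)[OF q] marginal_boundsD(3)[OF p] by simp
  have "Pstep nb (Pfuel nb (Suc k)) G L v i = 1/2 \<longleftrightarrow> Pstep nb prob G L v i = 1/2"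
    by (rule Pstep_half_iff_same) (auto simp: bounds reachable_vertex.prob_eq_Pstep[OF reachable_vertexI[OF valid_nb]])
  then have half: "q = 1/2 \<longleftrightarrow> p = 1/2" unfolding q_def p_def prob_eq_Pstep by simp
  show ?thesis using zero half marginal_bounds_interval[OF q] marginal_bounds_interval[OF p] by blast
qed

end

theorem theorem12:
  fixes nb :: "'a set set \<Rightarrow> 'a \<Rightarrow> 'a list"
    and V :: "'a set" and E :: "'a set set" and L :: "'a \<Rightarrow> nat set"
    and v :: 'a and i :: nat and D :: int
  assumes "valid_nb nb"
    and "reachable (V, E) L v"
    and "i \<in> {1..4}"
    and "D \<ge> 2"
  shows "(P nb (V, E) L v i D = 0 \<longleftrightarrow> prob (V, E) L v i = 0)
       \<and> (P nb (V, E) L v i D = 1/2 \<longleftrightarrow> prob (V, E) L v i = 1/2)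
       \<and> (P nb (V, E) L v i D \<in> {1/13..13/27} \<longleftrightarrow> prob (V, E) L v i \<in> {1/13..13/27})"
proof -
  define k where "k = nat D - 2"
  have "P nb (V, E) L v i D = Pfuel nb (Suc (Suc k)) (V, E) L v i"
    unfolding P_def k_def using assms(4) by (simp add: numeral_2_eq_2 Suc_diff_Suc)
  then show ?thesis
    using reachable_vertex.Pfuel_same_as_prob[OF reachable_vertexI[OF assms(1,2)]] by simp
qed

end
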